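(* Let $M,M',M_0,M'_0$ be non-negative definite Hermitian matrices of the same size, let $\lambda_j$ be the $j$th largest eigenvalue of $\bar M'^{1/2}M\bar M'^{1/2}$ and $\lambda_{0j}$ the $j$th largest eigenvalue of $\bar M_0'^{1/2}M_0\bar M_0'^{1/2}$, and set $\delta=M-M_0$, $\delta'=M'-M'_0$. Then for all $j$, $$|\lambda_j-\lambda_{0j}|\le\min\Big\{\|\bar M'_0\delta\|+\|\bar M_0^{1/2}\delta'\bar M_0^{1/2}\|,\ \|\bar M_0\delta'\|+\|\bar M_0'^{1/2}\delta\bar M_0'^{1/2}\|\Big\}+\|\bar\delta'\delta\|.$$
   Context: A bar denotes entrywise complex conjugation, $X^{1/2}$ the positive semidefinite square root, and $\|\cdot\|$ the operator norm. *)

theory Defs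
  imports "Jordan_Normal_Form.Schur_Decomposition" "HOL-Computational_Algebra.Polynomial"
begin

definition mconj :: "complex mat \<Rightarrow> complex mat" where
  "mconj A = map_mat cnj A"

definition hermitian_mat :: "nat \<Rightarrow> complex mat \<Rightarrow> bool" where
  "hermitian_mat n A \<longleftrightarrow> A \<in> carrier_mat n n \<and> mat_adjoint A = A"

definition psd_mat :: "nat \<Rightarrow> complex mat \<Rightarrow> bool" where
  "psd_mat n A \<longleftrightarrow> hermitian_mat n A \<and>
     (\<forall>v \<in> carrier_vec n. 0 \<le> Re ((A *\<^sub>v v) \<bullet>c v))"

definition msqrt :: "complex mat \<Rightarrow> complex mat" where
  "msqrt A = (THE S. psd_mat (dim_row A) S \<and> S * S = A)"

text \<open>Eigenvalues (with algebraic multiplicity, as roots of the characteristic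
  polynomial), real parts, sorted in decreasing order; entry j of this list
  is the (j+1)-th largest eigenvalue.  For Hermitian matrices all eigenvalues are real.\<close>
definition eigs_desc :: "complex mat \<Rightarrow> real list" where
  "eigs_desc A = rev (sorted_list_of_multiset (image_mset Re (proots (char_poly A))))"

definition vnorm :: "complex vec \<Rightarrow> real" where
  "vnorm v = sqrt (\<Sum>i<dim_vec v. (cmod (v $ i))\<^sup>2)"

definition opnorm :: "complex mat \<Rightarrow> real" where
  "opnorm A = Sup {vnorm (A *\<^sub>v v) | v. v \<in> carrier_vec (dim_col A) \<and> vnorm v \<le> 1}"

end

theory Submission
  imports Defs "HOL-Analysis.L2_Norm" "Jordan_Normal_Form.Spectral_Radius"
begin

text \<open>
  Write \<open>N = conj M'\<close> and \<open>N\<^sub>0 = conj M'\<^sub>0\<close>. The spectrum of \<open>N\<^sup>1\<^sup>/\<^sup>2 M N\<^sup>1\<^sup>/\<^sup>2\<close> is that of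
  \<open>N M\<close>, hence also that of \<open>M\<^sup>1\<^sup>/\<^sup>2 N M\<^sup>1\<^sup>/\<^sup>2\<close>, because \<open>char_poly (A B) = char_poly (B A)\<close>.
  Passing from \<open>(M, M')\<close> to \<open>(M\<^sub>0, M'\<^sub>0)\<close> through \<open>(M\<^sub>0, M')\<close> therefore costs two Hermitian
  perturbations: \<open>N\<^sup>1\<^sup>/\<^sup>2 \<delta> N\<^sup>1\<^sup>/\<^sup>2\<close>, with the eigenvalues of \<open>N \<delta> = N\<^sub>0 \<delta> + conj \<delta>' \<delta>\<close>, and
  \<open>M\<^sub>0\<^sup>1\<^sup>/\<^sup>2 conj \<delta>' M\<^sub>0\<^sup>1\<^sup>/\<^sup>2\<close>, the entrywise conjugate of \<open>(conj M\<^sub>0)\<^sup>1\<^sup>/\<^sup>2 \<delta>' (conj M\<^sub>0)\<^sup>1\<^sup>/\<^sup>2\<close>;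
  going through \<open>(M, M'\<^sub>0)\<close> instead gives the other term of the minimum. Each perturbation
  moves the \<open>j\<close>-th eigenvalue by at most its spectral radius (Weyl's inequality, proved from
  the spectral theorem by the Courant--Fischer dimension count), and the spectral radius is
  bounded by the operator norm.
\<close>

section \<open>Adjoints, Hermitian and unitary matrices\<close>

lemma index_mult_mat_sum:
  assumes "A \<in> carrier_mat n m" "B \<in> carrier_mat m k" "i < n" "j < k"
  shows "(A * B) $$ (i,j) = (\<Sum>l<m. A $$ (i,l) * B $$ (l,j))"
  using assms by (auto simp: scalar_prod_def lessThan_atLeast0 intro!: sum.cong)

lemma index_mult_mat_vec_sum:
  assumes "A \<in> carrier_mat n m" "v \<in> carrier_vec m" "i < n"
  shows "(A *\<^sub>v v) $ i = (\<Sum>l<m. A $$ (i,l) * v $ l)"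
  using assms by (auto simp: scalar_prod_def lessThan_atLeast0 intro!: sum.cong)

lemma cscalar_prod_sum:
  assumes "(v :: complex vec) \<in> carrier_vec n" "w \<in> carrier_vec n"
  shows "v \<bullet>c w = (\<Sum>i<n. v $ i * cnj (w $ i))"
  using assms by (auto simp: scalar_prod_def lessThan_atLeast0 intro!: sum.cong)

lemma conjugate_minus_vec:
  "(x :: complex vec) \<in> carrier_vec n \<Longrightarrow> y \<in> carrier_vec n \<Longrightarrow>
    conjugate (x - y) = conjugate x - conjugate y"
  by (intro eq_vecI) auto

lemma cscalar_prod_minus_left:
  assumes "(x :: complex vec) \<in> carrier_vec n" "y \<in> carrier_vec n" "w \<in> carrier_vec n"
  shows "(x - y) \<bullet>c w = x \<bullet>c w - y \<bullet>c w"
  using assms by (simp add: minus_scalar_prod_distrib[of _ n])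

lemma cscalar_prod_minus_right:
  assumes "(x :: complex vec) \<in> carrier_vec n" "y \<in> carrier_vec n" "w \<in> carrier_vec n"
  shows "w \<bullet>c (x - y) = w \<bullet>c x - w \<bullet>c y"
  using assms by (simp add: conjugate_minus_vec[of _ n] scalar_prod_minus_distrib[of _ n])

lemma mult_mat_vec_unit_vec:
  assumes "(A :: complex mat) \<in> carrier_mat n m" "j < m"
  shows "A *\<^sub>v unit_vec m j = col A j"
  using assms by (intro eq_vecI) auto

lemma eq_mat_by_mult_vec:
  fixes A B :: "complex mat"
  assumes A: "A \<in> carrier_mat n m" and B: "B \<in> carrier_mat n m"
    and eq: "\<And>v. v \<in> carrier_vec m \<Longrightarrow> A *\<^sub>v v = B *\<^sub>v v"
  shows "A = B"
proof (rule eq_matI)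
  fix i j assume ij: "i < dim_row B" "j < dim_col B"
  then have "col A j = col B j"
    using A B eq[of "unit_vec m j"] by (simp add: mult_mat_vec_unit_vec[symmetric])
  then show "A $$ (i,j) = B $$ (i,j)"
    using A B ij by (metis carrier_matD col_def index_vec)
qed (use A B in auto)

lemma mult_mat_vec_assoc3:
  assumes "A \<in> carrier_mat n n" "B \<in> carrier_mat n n" "C \<in> carrier_mat n n" "v \<in> carrier_vec n"
  shows "(A * B * C) *\<^sub>v v = A *\<^sub>v (B *\<^sub>v (C *\<^sub>v v))"
  using assms by (simp add: assoc_mult_mat_vec[of _ n n _ n])

lemma mat_adjoint_dim [simp]:
  "dim_row (mat_adjoint A) = dim_col A" "dim_col (mat_adjoint A) = dim_row A"
  unfolding mat_adjoint_def by (auto simp: mat_of_rows_def)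

lemma index_mat_adjoint [simp]:
  "i < dim_col A \<Longrightarrow> j < dim_row A \<Longrightarrow> mat_adjoint A $$ (i,j) = cnj (A $$ (j,i))"
  unfolding mat_adjoint_def by (auto simp: mat_of_rows_index)

lemma mat_adjoint_carrier [simp]: "A \<in> carrier_mat n m \<Longrightarrow> mat_adjoint A \<in> carrier_mat m n"
  by (metis mat_adjoint_dim carrier_matD carrier_matI)

lemma mult_mat_adjoint_vec_carrier [simp]:
  "A \<in> carrier_mat n m \<Longrightarrow> v \<in> carrier_vec n \<Longrightarrow> mat_adjoint A *\<^sub>v v \<in> carrier_vec m"
  by (metis mat_adjoint_carrier mult_mat_vec_carrier)

lemma mat_adjoint_adjoint [simp]: "mat_adjoint (mat_adjoint (A :: complex mat)) = A"
  by (rule eq_matI) auto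

lemma mat_adjoint_one [simp]: "mat_adjoint (1\<^sub>m n) = (1\<^sub>m n :: complex mat)"
  by (rule eq_matI) auto

lemma mat_adjoint_minus:
  "(A :: complex mat) \<in> carrier_mat n m \<Longrightarrow> B \<in> carrier_mat n m \<Longrightarrow>
    mat_adjoint (A - B) = mat_adjoint A - mat_adjoint B"
  by (rule eq_matI) auto

lemma mat_adjoint_mult:
  assumes A: "(A :: complex mat) \<in> carrier_mat n m" and B: "B \<in> carrier_mat m k"
  shows "mat_adjoint (A * B) = mat_adjoint B * mat_adjoint A"
proof (rule eq_matI)
  fix i j assume "i < dim_row (mat_adjoint B * mat_adjoint A)" "j < dim_col (mat_adjoint B * mat_adjoint A)"
  then have ij: "i < k" "j < n" using A B by auto
  have "(mat_adjoint B * mat_adjoint A) $$ (i,j) = (\<Sum>l<m. cnj (A $$ (j,l) * B $$ (l,i)))"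
    using A B ij by (auto simp: index_mult_mat_sum[of _ k m _ n] mult.commute simp del: index_mult_mat
        intro!: sum.cong)
  also have "\<dots> = mat_adjoint (A * B) $$ (i,j)"
    using A B ij by (simp add: index_mult_mat_sum[OF A B ij(2,1)])
  finally show "mat_adjoint (A * B) $$ (i,j) = (mat_adjoint B * mat_adjoint A) $$ (i,j)" ..
qed (use A B in auto)

lemma mat_adjoint_cscalar_prod:
  assumes A: "(A :: complex mat) \<in> carrier_mat n m" and v: "v \<in> carrier_vec m" and w: "w \<in> carrier_vec n"
  shows "(A *\<^sub>v v) \<bullet>c w = v \<bullet>c (mat_adjoint A *\<^sub>v w)"
proof -
  have "(A *\<^sub>v v) \<bullet>c w = (\<Sum>i<n. \<Sum>l<m. A $$ (i,l) * v $ l * cnj (w $ i))"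
    using assms by (simp add: cscalar_prod_sum[of _ n] index_mult_mat_vec_sum[of _ n m]
        sum_distrib_right del: index_mult_mat_vec)
  also have "\<dots> = (\<Sum>l<m. v $ l * cnj (\<Sum>i<n. cnj (A $$ (i,l)) * w $ i))"
    by (subst sum.swap) (simp add: sum_distrib_left mult_ac)
  also have "\<dots> = (\<Sum>l<m. v $ l * cnj ((mat_adjoint A *\<^sub>v w) $ l))"
    using A w by (intro sum.cong refl) (simp add: index_mult_mat_vec_sum[of _ m n] del: index_mult_mat_vec)
  also have "\<dots> = v \<bullet>c (mat_adjoint A *\<^sub>v w)"
    using A w by (subst cscalar_prod_sum[OF v]) (auto intro: mult_mat_vec_carrier[of _ m n])
  finally show ?thesis .
qed

lemma hermitian_matD:
  assumes "hermitian_mat n A" shows "A \<in> carrier_mat n n" "mat_adjoint A = A"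
  using assms unfolding hermitian_mat_def by auto

lemma psd_mat_hermitian: "psd_mat n A \<Longrightarrow> hermitian_mat n A"
  unfolding psd_mat_def by simp

lemma hermitian_mat_minus:
  "hermitian_mat n A \<Longrightarrow> hermitian_mat n B \<Longrightarrow> hermitian_mat n (A - B)"
  unfolding hermitian_mat_def by (auto simp: mat_adjoint_minus[of _ n n])

lemma hermitian_mat_congruence:
  assumes A: "hermitian_mat n A" and U: "U \<in> carrier_mat n n"
  shows "hermitian_mat n (mat_adjoint U * A * U)"
  using hermitian_matD[OF A] U
  by (auto simp: hermitian_mat_def mat_adjoint_mult[of _ n n _ n] assoc_mult_mat[of _ n n _ n _ n])

lemma hermitian_mat_sandwich:
  assumes "hermitian_mat n S" "hermitian_mat n X"
  shows "hermitian_mat n (S * X * S)"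
  using hermitian_mat_congruence[OF assms(2) hermitian_matD(1)[OF assms(1)]]
  by (simp add: hermitian_matD(2)[OF assms(1)])

lemma congruence_mult_mat_vec:
  fixes U H A :: "complex mat"
  assumes U: "U \<in> carrier_mat n n" and H: "H \<in> carrier_mat n n" and A: "A \<in> carrier_mat n n"
    and v: "v \<in> carrier_vec n"
  shows "mat_adjoint (U * H) * A * (U * H) *\<^sub>v v = mat_adjoint H *\<^sub>v ((mat_adjoint U * A * U) *\<^sub>v (H *\<^sub>v v))"
  using assms
  by (simp add: mat_adjoint_mult[of _ n n _ n] assoc_mult_mat_vec[of _ n n _ n] mult_carrier_mat[of _ n n])

definition unitary_mat :: "nat \<Rightarrow> complex mat \<Rightarrow> bool" where
  "unitary_mat n U \<longleftrightarrow>
     U \<in> carrier_mat n n \<and> mat_adjoint U * U = 1\<^sub>m n \<and> U * mat_adjoint U = 1\<^sub>m n"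

lemma unitary_matD:
  assumes "unitary_mat n U"
  shows "U \<in> carrier_mat n n" "mat_adjoint U * U = 1\<^sub>m n" "U * mat_adjoint U = 1\<^sub>m n"
  using assms unfolding unitary_mat_def by auto

lemma unitary_mat_adjoint: "unitary_mat n U \<Longrightarrow> unitary_mat n (mat_adjoint U)"
  unfolding unitary_mat_def by auto

lemma unitary_mat_mult:
  assumes U: "unitary_mat n U" and V: "unitary_mat n V"
  shows "unitary_mat n (U * V)"
proof -
  note U' = unitary_matD[OF U] and V' = unitary_matD[OF V]
  have "mat_adjoint (U * V) * (U * V) = mat_adjoint V * ((mat_adjoint U * U) * V)"
    "U * V * mat_adjoint (U * V) = U * ((V * mat_adjoint V) * mat_adjoint U)"
    using U'(1) V'(1)
    by (simp_all add: mat_adjoint_mult[of _ n n _ n] assoc_mult_mat[of _ n n _ n _ n] mult_carrier_mat[of _ n n])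
  then show ?thesis
    using U' V' by (simp add: unitary_mat_def)
qed

lemma unitary_mat_cancel:
  assumes U: "unitary_mat n U" and v: "v \<in> carrier_vec n"
  shows "U *\<^sub>v (mat_adjoint U *\<^sub>v v) = v" "mat_adjoint U *\<^sub>v (U *\<^sub>v v) = v"
  using unitary_matD[OF U] v by (simp_all add: assoc_mult_mat_vec[symmetric, of _ n n _ n])

section \<open>The Euclidean norm\<close>

lemma vnorm_L2_set: "vnorm v = L2_set (\<lambda>i. cmod (v $ i)) {..<dim_vec v}"
  unfolding vnorm_def L2_set_def ..

lemma vnorm_sq_sum: "v \<in> carrier_vec n \<Longrightarrow> (vnorm v)\<^sup>2 = (\<Sum>i<n. (cmod (v $ i))\<^sup>2)"
  by (simp add: vnorm_def sum_nonneg)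

lemma vnorm_nonneg [simp]: "0 \<le> vnorm v"
  by (simp add: vnorm_L2_set)

lemma cscalar_prod_self: "(v :: complex vec) \<bullet>c v = of_real ((vnorm v)\<^sup>2)"
proof -
  have "v \<bullet>c v = (\<Sum>i<dim_vec v. of_real ((cmod (v $ i))\<^sup>2))"
    by (simp add: cscalar_prod_sum[of _ "dim_vec v"] complex_norm_square del: of_real_power)
  then show ?thesis
    by (simp add: vnorm_def sum_nonneg del: of_real_power)
qed

lemma vnorm_eq_0_iff:
  assumes "v \<in> carrier_vec n" shows "vnorm v = 0 \<longleftrightarrow> v = 0\<^sub>v n"
proof
  assume "vnorm v = 0"
  then have "v \<bullet>c v = 0" by (simp add: cscalar_prod_self)
  then show "v = 0\<^sub>v n" using assms by (metis conjugate_square_eq_0_vec)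
qed (simp add: vnorm_def)

lemma vnorm_zero_vec [simp]: "vnorm (0\<^sub>v n) = 0"
  by (simp add: vnorm_def)

lemma vnorm_unit_vec:
  assumes "k < n" shows "vnorm (unit_vec n k) = 1"
proof -
  have "(vnorm (unit_vec n k))\<^sup>2 = 1"
    using cscalar_prod_self[of "unit_vec n k"] assms by (simp del: of_real_power)
  then show ?thesis using vnorm_nonneg[of "unit_vec n k"] by (simp add: power2_eq_1_iff)
qed

lemma vnorm_smult: "vnorm (a \<cdot>\<^sub>v v) = cmod a * vnorm v"
  by (simp add: vnorm_def norm_mult power_mult_distrib sum_distrib_left[symmetric] real_sqrt_mult)

lemma vnorm_conjugate [simp]: "vnorm (conjugate v) = vnorm v"
  by (simp add: vnorm_def)

lemma vnorm_index_le: "i < dim_vec v \<Longrightarrow> cmod (v $ i) \<le> vnorm v"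
  unfolding vnorm_L2_set by (rule member_le_L2_set) auto

lemma vnorm_add:
  assumes "(v :: complex vec) \<in> carrier_vec n" "w \<in> carrier_vec n"
  shows "vnorm (v + w) \<le> vnorm v + vnorm w"
proof -
  have "vnorm (v + w) \<le> L2_set (\<lambda>i. cmod (v $ i) + cmod (w $ i)) {..<n}"
    using assms unfolding vnorm_L2_set by (auto intro!: L2_set_mono norm_triangle_ineq)
  also have "\<dots> \<le> vnorm v + vnorm w"
    using assms unfolding vnorm_L2_set by (auto intro: L2_set_triangle_ineq)
  finally show ?thesis .
qed

lemma cmod_cscalar_prod_le:
  assumes "(v :: complex vec) \<in> carrier_vec n" "w \<in> carrier_vec n"
  shows "cmod (v \<bullet>c w) \<le> vnorm v * vnorm w"
proof -
  have "cmod (v \<bullet>c w) \<le> (\<Sum>i<n. cmod (v $ i) * cmod (w $ i))"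
    using assms by (auto simp: cscalar_prod_sum[of _ n] norm_mult intro: order_trans[OF norm_sum])
  also have "\<dots> \<le> vnorm v * vnorm w"
    using L2_set_mult_ineq[of "\<lambda>i. cmod (v $ i)" "\<lambda>i. cmod (w $ i)" "{..<n}"] assms
    by (simp add: vnorm_L2_set)
  finally show ?thesis .
qed

lemma vnorm_unitary:
  assumes U: "unitary_mat n U" and v: "v \<in> carrier_vec n"
  shows "vnorm (U *\<^sub>v v) = vnorm v"
proof -
  have "of_real ((vnorm (U *\<^sub>v v))\<^sup>2) = (U *\<^sub>v v) \<bullet>c (U *\<^sub>v v)"
    by (simp add: cscalar_prod_self)
  also have "\<dots> = v \<bullet>c v"
    using unitary_matD(1)[OF U] v
    by (simp add: mat_adjoint_cscalar_prod[of _ n n] unitary_mat_cancel[OF U])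
  finally have "(vnorm (U *\<^sub>v v))\<^sup>2 = (vnorm v)\<^sup>2"
    unfolding cscalar_prod_self of_real_eq_iff .
  then show ?thesis by simp
qed

section \<open>The spectral theorem\<close>

abbreviation real_diag_mat :: "nat \<Rightarrow> (nat \<Rightarrow> real) \<Rightarrow> complex mat" where
  "real_diag_mat n d \<equiv> mat_diag n (\<lambda>i. of_real (d i))"

lemma dim_mat_diag [simp]: "dim_row (mat_diag n f) = n" "dim_col (mat_diag n f) = n"
  unfolding mat_diag_def by simp_all

lemma index_mat_diag [simp]:
  "i < n \<Longrightarrow> j < n \<Longrightarrow> mat_diag n f $$ (i,j) = (if i = j then f i else 0)"
  unfolding mat_diag_def by simp

lemma index_mult_mat_diag_vec:
  assumes "v \<in> carrier_vec n" "i < n"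
  shows "(mat_diag n f *\<^sub>v v) $ i = f i * v $ i"
proof -
  have "(mat_diag n f *\<^sub>v v) $ i = (\<Sum>l<n. (if i = l then f i else 0) * v $ l)"
    using assms by (simp add: index_mult_mat_vec_sum[of _ n n] del: index_mult_mat_vec)
  also have "\<dots> = (\<Sum>l\<in>{i}. f i * v $ l)"
    using assms by (intro sum.mono_neutral_cong_right) auto
  finally show ?thesis by simp
qed

lemma mat_adjoint_real_diag_mat [simp]: "mat_adjoint (real_diag_mat n d) = real_diag_mat n d"
  by (rule eq_matI) auto

text \<open>For \<open>u = 0\<close> the factor \<open>2 / 0 = 0\<close> makes this the identity, so no case distinction is needed.\<close>

definition householder :: "complex vec \<Rightarrow> complex mat" where
  "householder u = mat (dim_vec u) (dim_vec u)
     (\<lambda>(i,j). (if i = j then 1 else 0) - of_real (2 / (vnorm u)\<^sup>2) * u $ i * cnj (u $ j))"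

lemma householder_dim [simp]:
  "dim_row (householder u) = dim_vec u" "dim_col (householder u) = dim_vec u"
  unfolding householder_def by auto

lemma householder_carrier [simp]: "u \<in> carrier_vec n \<Longrightarrow> householder u \<in> carrier_mat n n"
  unfolding householder_def by auto

lemma householder_mult_vec:
  assumes u: "u \<in> carrier_vec n" and v: "v \<in> carrier_vec n"
  shows "householder u *\<^sub>v v = v - (of_real (2 / (vnorm u)\<^sup>2) * (v \<bullet>c u)) \<cdot>\<^sub>v u"
proof -
  define c where "c = (of_real (2 / (vnorm u)\<^sup>2) :: complex)"
  have "householder u *\<^sub>v v = v - (c * (v \<bullet>c u)) \<cdot>\<^sub>v u"
  proof (rule eq_vecI)
    fix i assume "i < dim_vec (v - (c * (v \<bullet>c u)) \<cdot>\<^sub>v u)"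
    with u have i: "i < n" by simp
    have "(householder u *\<^sub>v v) $ i
        = (\<Sum>l<n. (if l = i then v $ l else 0) - c * u $ i * (v $ l * cnj (u $ l)))"
      using u v i by (subst index_mult_mat_vec_sum[of _ n n])
        (auto simp: householder_def c_def algebra_simps intro!: sum.cong)
    also have "\<dots> = v $ i - c * u $ i * (v \<bullet>c u)"
      using i by (simp add: sum_subtractf sum_distrib_left[symmetric] cscalar_prod_sum[OF v u])
    finally show "(householder u *\<^sub>v v) $ i = (v - (c * (v \<bullet>c u)) \<cdot>\<^sub>v u) $ i"
      using u v i by (simp add: mult_ac)
  qed (use u v in simp)
  then show ?thesis unfolding c_def .
qed

lemma mat_adjoint_householder: "u \<in> carrier_vec n \<Longrightarrow> mat_adjoint (householder u) = householder u"
  by (rule eq_matI) (auto simp: householder_def)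

lemma householder_involutive:
  assumes u: "u \<in> carrier_vec n" and v: "v \<in> carrier_vec n"
  shows "householder u *\<^sub>v (householder u *\<^sub>v v) = v"
proof -
  define c where "c = (of_real (2 / (vnorm u)\<^sup>2) :: complex)"
  note H = householder_mult_vec[OF u, folded c_def]
  have c: "c * (2 - c * (u \<bullet>c u)) = 0"
    by (cases "vnorm u = 0") (simp_all add: c_def cscalar_prod_self field_simps)
  have Hv: "householder u *\<^sub>v v \<in> carrier_vec n"
    using u v by (simp add: H)
  have Hvu: "(householder u *\<^sub>v v) \<bullet>c u = v \<bullet>c u - c * (v \<bullet>c u) * (u \<bullet>c u)"
    using u v by (simp add: H cscalar_prod_minus_left[of _ n])
  show ?thesis
  proof (rule eq_vecI)
    fix i assume "i < dim_vec v"
    with v have i: "i < n" by simp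
    have "(householder u *\<^sub>v (householder u *\<^sub>v v)) $ i
        = v $ i - c * (v \<bullet>c u) * u $ i - c * ((householder u *\<^sub>v v) \<bullet>c u) * u $ i"
      using u v Hv i by (simp add: H)
    also have "\<dots> = v $ i - c * (2 - c * (u \<bullet>c u)) * (v \<bullet>c u) * u $ i"
      unfolding Hvu by (simp add: algebra_simps)
    finally show "(householder u *\<^sub>v (householder u *\<^sub>v v)) $ i = v $ i"
      using c by simp
  qed (use u v Hv in \<open>simp add: H\<close>)
qed

lemma unitary_householder:
  assumes u: "u \<in> carrier_vec n" shows "unitary_mat n (householder u)"
proof -
  have "householder u * householder u = 1\<^sub>m n"
    using u by (intro eq_mat_by_mult_vec[of _ n n])
      (simp_all add: assoc_mult_mat_vec[of _ n n _ n] householder_involutive mult_carrier_mat[of _ n n])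
  then show ?thesis
    using u by (simp add: unitary_mat_def mat_adjoint_householder)
qed

lemma householder_fixes:
  assumes "u \<in> carrier_vec n" "v \<in> carrier_vec n" "v \<bullet>c u = 0"
  shows "householder u *\<^sub>v v = v"
  using assms by (intro eq_vecI) (auto simp: householder_mult_vec)

lemma householder_swaps:
  assumes x: "x \<in> carrier_vec n" and y: "y \<in> carrier_vec n"
    and xx: "x \<bullet>c x = y \<bullet>c y" and xy: "x \<bullet>c y = y \<bullet>c x"
  shows "householder (x - y) *\<^sub>v x = y"
proof (cases "x = y")
  case True
  then show ?thesis using x householder_fixes[of "0\<^sub>v n" n x] by simp
next
  case False
  define u where "u = x - y"
  have u: "u \<in> carrier_vec n" using x y by (simp add: u_def)
  have "u \<noteq> 0\<^sub>v n"
  proof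
    assume "u = 0\<^sub>v n"
    then have "x $ i = y $ i" if "i < n" for i
      using that x y by (metis carrier_vecD index_minus_vec(1) index_zero_vec(1) right_minus_eq u_def)
    then show False using False x y by (metis carrier_vecD eq_vecI)
  qed
  then have "vnorm u \<noteq> 0" using u by (simp add: vnorm_eq_0_iff)
  have "u \<bullet>c u = 2 * (x \<bullet>c u)"
    using x y xx xy by (simp add: u_def cscalar_prod_minus_left[of _ n] cscalar_prod_minus_right[of _ n])
  then have xu: "x \<bullet>c u = of_real ((vnorm u)\<^sup>2 / 2)"
    by (simp add: cscalar_prod_self)
  have "of_real (2 / (vnorm u)\<^sup>2) * (x \<bullet>c u) = of_real (2 / (vnorm u)\<^sup>2 * ((vnorm u)\<^sup>2 / 2))"
    unfolding xu of_real_mult ..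
  also have "\<dots> = 1" using \<open>vnorm u \<noteq> 0\<close> by simp
  finally have "householder u *\<^sub>v x = x - 1 \<cdot>\<^sub>v u"
    by (simp add: householder_mult_vec[OF u x])
  then show ?thesis
    using x y by (simp add: u_def) (intro eq_vecI, auto)
qed

lemma conjugate_unit_vec [simp]: "conjugate (unit_vec n k) = (unit_vec n k :: complex vec)"
  by (intro eq_vecI) (auto simp: unit_vec_def)

lemma householder_unit_vec:
  assumes y: "y \<in> carrier_vec n" "vnorm y = 1" and k: "k < n"
    and real: "Im (y $ k) = 0" and prefix: "\<And>i. i < k \<Longrightarrow> y $ i = 0"
  shows "householder (unit_vec n k - y) *\<^sub>v unit_vec n k = y"
    and "j < k \<Longrightarrow> householder (unit_vec n k - y) *\<^sub>v unit_vec n j = unit_vec n j"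
proof -
  have "cnj (y $ k) = y $ k" using real by (simp add: complex_eq_iff)
  then show "householder (unit_vec n k - y) *\<^sub>v unit_vec n k = y"
    using y k by (intro householder_swaps) (simp_all add: cscalar_prod_self)
  assume "j < k"
  then show "householder (unit_vec n k - y) *\<^sub>v unit_vec n j = unit_vec n j"
    using y k prefix by (intro householder_fixes[of _ n]) auto
qed

lemma exists_unit_multiple_real_at:
  assumes z: "z \<in> carrier_vec n" "z \<noteq> 0\<^sub>v n" and k: "k < n"
  obtains a where "vnorm (a \<cdot>\<^sub>v z) = 1" "Im ((a \<cdot>\<^sub>v z) $ k) = 0"
proof -
  define p where "p = (if z $ k = 0 then 1 else cnj (z $ k) / of_real (cmod (z $ k)))"
  have p: "cmod p = 1" by (simp add: p_def norm_divide)
  have "Im (p * z $ k) = 0"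
    by (simp add: p_def mult.commute[of "cnj _"] complex_norm_square[symmetric] del: of_real_power)
  moreover have "vnorm z \<noteq> 0" using z by (simp add: vnorm_eq_0_iff)
  ultimately show ?thesis
    using z k p by (intro that[of "p / of_real (vnorm z)"]) (simp_all add: vnorm_smult norm_divide)
qed

lemma eigenvector_vanishing_on_prefix:
  fixes T :: "complex mat"
  assumes T: "T \<in> carrier_mat n n" and k: "k < n"
    and zero: "\<And>i j. i < k \<Longrightarrow> k \<le> j \<Longrightarrow> j < n \<Longrightarrow> T $$ (i,j) = 0"
  obtains e z where "z \<in> carrier_vec n" "z \<noteq> 0\<^sub>v n" "T *\<^sub>v z = e \<cdot>\<^sub>v z" "\<And>i. i < k \<Longrightarrow> z $ i = 0"
proof -
  define m where "m = n - k"
  have n: "n = k + m" using k by (simp add: m_def)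
  define B where "B = mat m m (\<lambda>(i,j). T $$ (i + k, j + k))"
  have B: "B \<in> carrier_mat m m" by (simp add: B_def)
  have T_blocks: "T = four_block_mat (mat k k (\<lambda>(i,j). T $$ (i,j))) (0\<^sub>m k m)
      (mat m k (\<lambda>(i,j). T $$ (i + k, j))) B"
    using T zero by (intro eq_matI) (auto simp: B_def n)
  obtain e where "eigenvalue B e"
    using spectrum_non_empty[OF B] k by (auto simp: spectrum_def m_def)
  then obtain w where w: "w \<in> carrier_vec m" "w \<noteq> 0\<^sub>v m" "B *\<^sub>v w = e \<cdot>\<^sub>v w"
    using B by (auto simp: eigenvalue_def eigenvector_def)
  define z where "z = 0\<^sub>v k @\<^sub>v w"
  have z: "z \<in> carrier_vec n" using w by (simp add: z_def n)
  have "T *\<^sub>v z = 0\<^sub>v k @\<^sub>v (e \<cdot>\<^sub>v w)"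
    by (subst T_blocks, unfold z_def, subst four_block_mat_mult_vec[of _ k k _ m _ m]) (use B w in auto)
  also have "\<dots> = e \<cdot>\<^sub>v z" using w by (intro eq_vecI) (auto simp: z_def)
  finally have "T *\<^sub>v z = e \<cdot>\<^sub>v z" .
  moreover have "z \<noteq> 0\<^sub>v n"
  proof
    assume "z = 0\<^sub>v n"
    moreover have "z $ (k + i) = w $ i" if "i < m" for i using that w by (simp add: z_def)
    ultimately have "w $ i = 0" if "i < m" for i using that by (simp add: n)
    then show False using w by (metis carrier_vecD eq_vecI index_zero_vec)
  qed
  moreover have "z $ i = 0" if "i < k" for i using that w by (simp add: z_def)
  ultimately show ?thesis using z that by blast
qed

definition diagonal_prefix :: "nat \<Rightarrow> nat \<Rightarrow> complex mat \<Rightarrow> bool" where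
  "diagonal_prefix n k T \<longleftrightarrow> (\<forall>j<k. \<exists>t. T *\<^sub>v unit_vec n j = t \<cdot>\<^sub>v unit_vec n j)"

lemma diagonal_prefix_zero:
  assumes T: "T \<in> carrier_mat n n" and D: "diagonal_prefix n k T"
    and ij: "j < k" "i < n" "j < n" "i \<noteq> j"
  shows "T $$ (i,j) = 0"
proof -
  obtain t where t: "T *\<^sub>v unit_vec n j = t \<cdot>\<^sub>v unit_vec n j"
    using D ij by (auto simp: diagonal_prefix_def)
  have "T $$ (i,j) = col T j $ i" using T ij by simp
  also have "col T j = t \<cdot>\<^sub>v unit_vec n j" using t T ij by (simp add: mult_mat_vec_unit_vec)
  finally show ?thesis using ij by simp
qed

lemma hermitian_diagonal_prefix_eigenvector:
  assumes hT: "hermitian_mat n T" and k: "k < n" and D: "diagonal_prefix n k T"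
  obtains e y where "y \<in> carrier_vec n" "vnorm y = 1" "Im (y $ k) = 0" "T *\<^sub>v y = e \<cdot>\<^sub>v y"
    "\<And>i. i < k \<Longrightarrow> y $ i = 0"
proof -
  note T = hermitian_matD(1)[OF hT]
  have upper_zero: "T $$ (i,j) = 0" if "i < k" "k \<le> j" "j < n" for i j
  proof -
    have "T $$ (j,i) = 0" using that T D by (intro diagonal_prefix_zero[of _ n k]) auto
    have "T $$ (i,j) = mat_adjoint T $$ (i,j)" using hermitian_matD(2)[OF hT] by simp
    also have "\<dots> = cnj (T $$ (j,i))" using T that by simp
    finally show ?thesis using \<open>T $$ (j,i) = 0\<close> by simp
  qed
  obtain e z where z: "z \<in> carrier_vec n" "z \<noteq> 0\<^sub>v n" "T *\<^sub>v z = e \<cdot>\<^sub>v z"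
    and z_prefix: "\<And>i. i < k \<Longrightarrow> z $ i = 0"
    using eigenvector_vanishing_on_prefix[OF T k upper_zero] by blast
  obtain a where "vnorm (a \<cdot>\<^sub>v z) = 1" "Im ((a \<cdot>\<^sub>v z) $ k) = 0"
    using exists_unit_multiple_real_at[OF z(1,2) k] by blast
  moreover have "T *\<^sub>v (a \<cdot>\<^sub>v z) = e \<cdot>\<^sub>v (a \<cdot>\<^sub>v z)"
    using z T by (simp add: mult_mat_vec[of _ n n] smult_smult_assoc mult.commute)
  ultimately show ?thesis
    using that[of "a \<cdot>\<^sub>v z" e] z z_prefix k by simp
qed

text \<open>A Householder reflection fixing \<open>e\<^sub>0, \<dots>, e\<^sub>k\<^sub>-\<^sub>1\<close> and swapping \<open>e\<^sub>k\<close> with a unit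
  eigenvector supported on the remaining coordinates diagonalises one more column.\<close>

lemma diagonal_prefix_step:
  assumes A: "hermitian_mat n A" and k: "k < n" and U: "unitary_mat n U"
    and D: "diagonal_prefix n k (mat_adjoint U * A * U)"
  obtains V where "unitary_mat n V" "diagonal_prefix n (Suc k) (mat_adjoint V * A * V)"
proof -
  define T where "T = mat_adjoint U * A * U"
  have hT: "hermitian_mat n T"
    unfolding T_def by (rule hermitian_mat_congruence[OF A unitary_matD(1)[OF U]])
  obtain e y where y: "y \<in> carrier_vec n" "vnorm y = 1" "Im (y $ k) = 0" "T *\<^sub>v y = e \<cdot>\<^sub>v y"
    and y_prefix: "\<And>i. i < k \<Longrightarrow> y $ i = 0"
    using hermitian_diagonal_prefix_eigenvector[OF hT k] D unfolding T_def by blast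
  define H where "H = householder (unit_vec n k - y)"
  have H: "H \<in> carrier_mat n n" "unitary_mat n H" "mat_adjoint H = H"
    using y(1) by (simp_all add: H_def unitary_householder mat_adjoint_householder[of _ n])
  note H_unit_vec = householder_unit_vec[OF y(1,2) k y(3) y_prefix, folded H_def]
  have Hy: "H *\<^sub>v y = unit_vec n k"
    using householder_involutive[of "unit_vec n k - y" n "unit_vec n k", folded H_def] y(1) H_unit_vec(1)
    by simp
  have conj_UH: "mat_adjoint (U * H) * A * (U * H) *\<^sub>v v = H *\<^sub>v (T *\<^sub>v (H *\<^sub>v v))"
    if "v \<in> carrier_vec n" for v
    using congruence_mult_mat_vec[OF unitary_matD(1)[OF U] H(1) hermitian_matD(1)[OF A] that] H(3)
    by (simp add: T_def)
  have "diagonal_prefix n (Suc k) (mat_adjoint (U * H) * A * (U * H))"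
    unfolding diagonal_prefix_def conj_UH[OF unit_vec_carrier]
  proof (intro allI impI)
    fix j assume "j < Suc k"
    then consider "j < k" | "j = k" by linarith
    then show "\<exists>t. H *\<^sub>v (T *\<^sub>v (H *\<^sub>v unit_vec n j)) = t \<cdot>\<^sub>v unit_vec n j"
    proof cases
      case 1
      then obtain t where "T *\<^sub>v unit_vec n j = t \<cdot>\<^sub>v unit_vec n j"
        using D by (auto simp: diagonal_prefix_def T_def)
      then show ?thesis
        using 1 H(1) by (auto simp: H_unit_vec(2) mult_mat_vec[of _ n n])
    next
      case 2
      then show ?thesis
        using H(1) y by (auto simp: H_unit_vec(1) Hy mult_mat_vec[of _ n n])
    qed
  qed
  then show ?thesis
    using that unitary_mat_mult[OF U H(2)] by simp
qed

lemma hermitian_diagonal_prefix: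
  assumes A: "hermitian_mat n A" and "k \<le> n"
  shows "\<exists>U. unitary_mat n U \<and> diagonal_prefix n k (mat_adjoint U * A * U)"
  using \<open>k \<le> n\<close>
proof (induction k)
  case 0
  have "unitary_mat n (1\<^sub>m n)" by (simp add: unitary_mat_def)
  then show ?case by (auto simp: diagonal_prefix_def)
next
  case (Suc k)
  then obtain U where "unitary_mat n U" "diagonal_prefix n k (mat_adjoint U * A * U)" by auto
  with diagonal_prefix_step[OF A] Suc.prems show ?case by (metis Suc_le_lessD)
qed

theorem hermitian_spectral:
  assumes A: "hermitian_mat n A"
  obtains U d where "unitary_mat n U" "A = U * real_diag_mat n d * mat_adjoint U"
proof -
  obtain U where U: "unitary_mat n U" and D: "diagonal_prefix n n (mat_adjoint U * A * U)"
    using hermitian_diagonal_prefix[OF A] by blast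
  define T where "T = mat_adjoint U * A * U"
  have hT: "hermitian_mat n T"
    unfolding T_def by (rule hermitian_mat_congruence[OF A unitary_matD(1)[OF U]])
  note T = hermitian_matD[OF hT]
  have "T = real_diag_mat n (\<lambda>i. Re (T $$ (i,i)))"
  proof (rule eq_matI)
    fix i j assume "i < dim_row (real_diag_mat n (\<lambda>i. Re (T $$ (i,i))))"
      "j < dim_col (real_diag_mat n (\<lambda>i. Re (T $$ (i,i))))"
    then have ij: "i < n" "j < n" by simp_all
    show "T $$ (i,j) = real_diag_mat n (\<lambda>i. Re (T $$ (i,i))) $$ (i,j)"
    proof (cases "i = j")
      case True
      have "cnj (T $$ (i,i)) = T $$ (i,i)"
        using T ij by (metis carrier_matD index_mat_adjoint)
      then show ?thesis using True ij by (simp add: complex_eq_iff)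
    next
      case False
      then show ?thesis using ij T(1) D by (simp add: T_def diagonal_prefix_zero[of _ n n])
    qed
  qed (use T in simp_all)
  moreover have "U * T * mat_adjoint U = (U * mat_adjoint U) * A * (U * mat_adjoint U)"
    using unitary_matD(1)[OF U] hermitian_matD(1)[OF A]
    by (simp add: T_def assoc_mult_mat[of _ n n _ n _ n] mult_carrier_mat[of _ n n])
  then have "A = U * T * mat_adjoint U"
    using unitary_matD[OF U] hermitian_matD(1)[OF A] by simp
  ultimately show ?thesis using that U by metis
qed

section \<open>Eigenvalues of Hermitian matrices\<close>

lemma hermitian_unitary_diag:
  assumes "unitary_mat n U" shows "hermitian_mat n (U * real_diag_mat n d * mat_adjoint U)"
proof -
  have "hermitian_mat n (real_diag_mat n d)"
    by (simp add: hermitian_mat_def)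
  from hermitian_mat_congruence[OF this mat_adjoint_carrier[OF unitary_matD(1)[OF assms]]]
  show ?thesis by simp
qed

lemma char_poly_unitary_diag:
  assumes U: "unitary_mat n U"
  shows "char_poly (U * real_diag_mat n d * mat_adjoint U) = (\<Prod>a\<leftarrow>map (\<lambda>i. of_real (d i)) [0..<n]. [:- a, 1:])"
proof -
  have "similar_mat (U * real_diag_mat n d * mat_adjoint U) (real_diag_mat n d)"
    using unitary_matD[OF U] unfolding similar_mat_def
    by (intro exI[of _ U] exI[of _ "mat_adjoint U"] similar_mat_witI[of U "mat_adjoint U" n])
      (auto intro: mult_carrier_mat[of _ n n])
  then have "char_poly (U * real_diag_mat n d * mat_adjoint U) = char_poly (real_diag_mat n d)"
    by (rule char_poly_similar)
  also have "\<dots> = (\<Prod>a\<leftarrow>diag_mat (real_diag_mat n d). [:- a, 1:])"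
    by (rule char_poly_upper_triangular[of _ n]) (auto simp: upper_triangular_def)
  also have "diag_mat (real_diag_mat n d) = map (\<lambda>i. of_real (d i)) [0..<n]"
    by (simp add: diag_mat_def mat_diag_def)
  finally show ?thesis .
qed

lemma proots_linear_factors: "proots (\<Prod>a\<leftarrow>cs. [:- a, 1:]) = mset (cs :: complex list)"
proof (induction cs)
  case (Cons a cs)
  have "(\<Prod>b\<leftarrow>cs. [:- b, 1:]) \<noteq> 0" by (auto simp: prod_list_zero_iff)
  then show ?case using Cons.IH by (simp add: proots_mult del: mult_pCons_left)
qed simp

lemma eigs_desc_unitary_diag:
  assumes "unitary_mat n U"
  shows "eigs_desc (U * real_diag_mat n d * mat_adjoint U) = rev (sort (map d [0..<n]))"
proof -
  have Re_eigs: "image_mset Re (mset (map (\<lambda>i. complex_of_real (d i)) [0..<n])) = mset (map d [0..<n])"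
    by (simp only: mset_map multiset.map_comp o_def Re_complex_of_real)
  show ?thesis
    unfolding eigs_desc_def char_poly_unitary_diag[OF assms] proots_linear_factors Re_eigs
      sorted_list_of_multiset_mset ..
qed

lemma eigenvector_unitary_diag:
  assumes U: "unitary_mat n U" and k: "k < n"
  shows "(U * real_diag_mat n d * mat_adjoint U) *\<^sub>v (U *\<^sub>v unit_vec n k)
    = of_real (d k) \<cdot>\<^sub>v (U *\<^sub>v unit_vec n k)"
proof -
  have "real_diag_mat n d *\<^sub>v unit_vec n k = of_real (d k) \<cdot>\<^sub>v unit_vec n k"
    using k by (intro eq_vecI) (auto simp: index_mult_mat_diag_vec)
  then show ?thesis
    using unitary_matD(1)[OF U]
    by (simp add: mult_mat_vec_assoc3 unitary_mat_cancel[OF U] mult_mat_vec[of _ n n])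
qed

lemma quadratic_form_unitary_diag:
  assumes U: "unitary_mat n U" and v: "v \<in> carrier_vec n"
  shows "(U * real_diag_mat n d * mat_adjoint U *\<^sub>v v) \<bullet>c v
    = of_real (\<Sum>i<n. d i * (cmod ((mat_adjoint U *\<^sub>v v) $ i))\<^sup>2)"
proof -
  define x where "x = mat_adjoint U *\<^sub>v v"
  have x: "x \<in> carrier_vec n" using unitary_matD(1)[OF U] v by (simp add: x_def)
  have Dx: "real_diag_mat n d *\<^sub>v x \<in> carrier_vec n"
    using x by (simp add: mult_mat_vec_carrier[of _ n n])
  have "(U * real_diag_mat n d * mat_adjoint U *\<^sub>v v) \<bullet>c v = (U *\<^sub>v (real_diag_mat n d *\<^sub>v x)) \<bullet>c v"
    using unitary_matD(1)[OF U] v by (simp add: mult_mat_vec_assoc3 x_def)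
  also have "\<dots> = (real_diag_mat n d *\<^sub>v x) \<bullet>c x"
    using mat_adjoint_cscalar_prod[OF unitary_matD(1)[OF U] Dx v] by (simp add: x_def)
  also have "\<dots> = (\<Sum>i<n. of_real (d i) * (x $ i * cnj (x $ i)))"
    unfolding cscalar_prod_sum[OF Dx x] using x by (intro sum.cong) (auto simp: index_mult_mat_diag_vec simp del: index_mult_mat_vec)
  also have "\<dots> = of_real (\<Sum>i<n. d i * (cmod (x $ i))\<^sup>2)"
    by (simp add: complex_norm_square del: of_real_power)
  finally show ?thesis unfolding x_def .
qed

lemma quadratic_form_unitary_diag_column:
  assumes U: "unitary_mat n U" and k: "k < n"
  shows "(U * real_diag_mat n d * mat_adjoint U *\<^sub>v (U *\<^sub>v unit_vec n k)) \<bullet>c (U *\<^sub>v unit_vec n k) = of_real (d k)"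
  using unitary_matD(1)[OF U] k cscalar_prod_self[of "U *\<^sub>v unit_vec n k"]
  by (simp add: eigenvector_unitary_diag[OF U k] vnorm_unitary[OF U] vnorm_unit_vec)

lemma psd_unitary_diag_iff:
  assumes U: "unitary_mat n U"
  shows "psd_mat n (U * real_diag_mat n d * mat_adjoint U) \<longleftrightarrow> (\<forall>i<n. 0 \<le> d i)"
proof
  assume "psd_mat n (U * real_diag_mat n d * mat_adjoint U)"
  then show "\<forall>i<n. 0 \<le> d i"
    using unitary_matD(1)[OF U] quadratic_form_unitary_diag_column[OF U]
    unfolding psd_mat_def by (metis Re_complex_of_real mult_mat_vec_carrier unit_vec_carrier)
next
  assume "\<forall>i<n. 0 \<le> d i"
  then show "psd_mat n (U * real_diag_mat n d * mat_adjoint U)"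
    using unitary_matD(1)[OF U]
    by (auto simp: psd_mat_def hermitian_unitary_diag[OF U] quadratic_form_unitary_diag[OF U]
        intro!: sum_nonneg)
qed

lemma quadratic_form_unitary_diag_ge:
  assumes U: "unitary_mat n U" and v: "v \<in> carrier_vec n"
    and ge: "\<And>i. i < n \<Longrightarrow> (mat_adjoint U *\<^sub>v v) $ i \<noteq> 0 \<Longrightarrow> t \<le> d i"
  shows "t * (vnorm v)\<^sup>2 \<le> Re ((U * real_diag_mat n d * mat_adjoint U *\<^sub>v v) \<bullet>c v)"
proof -
  define x where "x = mat_adjoint U *\<^sub>v v"
  have x: "x \<in> carrier_vec n" using unitary_matD(1)[OF U] v by (simp add: x_def)
  have "t * (vnorm v)\<^sup>2 = t * (vnorm x)\<^sup>2"
    using vnorm_unitary[OF unitary_mat_adjoint[OF U] v] by (simp add: x_def)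
  also have "\<dots> = (\<Sum>i<n. t * (cmod (x $ i))\<^sup>2)"
    by (simp add: vnorm_sq_sum[OF x] sum_distrib_left)
  also have "\<dots> \<le> (\<Sum>i<n. d i * (cmod (x $ i))\<^sup>2)"
  proof (rule sum_mono)
    fix i assume "i \<in> {..<n}"
    then show "t * (cmod (x $ i))\<^sup>2 \<le> d i * (cmod (x $ i))\<^sup>2"
      using ge[of i] by (cases "x $ i = 0") (auto simp: x_def intro: mult_right_mono)
  qed
  also have "\<dots> = Re ((U * real_diag_mat n d * mat_adjoint U *\<^sub>v v) \<bullet>c v)"
    by (simp add: quadratic_form_unitary_diag[OF U v] x_def)
  finally show ?thesis .
qed

lemma quadratic_form_unitary_diag_le:
  assumes U: "unitary_mat n U" and v: "v \<in> carrier_vec n"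
    and le: "\<And>i. i < n \<Longrightarrow> (mat_adjoint U *\<^sub>v v) $ i \<noteq> 0 \<Longrightarrow> d i \<le> t"
  shows "Re ((U * real_diag_mat n d * mat_adjoint U *\<^sub>v v) \<bullet>c v) \<le> t * (vnorm v)\<^sup>2"
proof -
  define x where "x = mat_adjoint U *\<^sub>v v"
  have x: "x \<in> carrier_vec n" using unitary_matD(1)[OF U] v by (simp add: x_def)
  have "Re ((U * real_diag_mat n d * mat_adjoint U *\<^sub>v v) \<bullet>c v) = (\<Sum>i<n. d i * (cmod (x $ i))\<^sup>2)"
    by (simp add: quadratic_form_unitary_diag[OF U v] x_def)
  also have "\<dots> \<le> (\<Sum>i<n. t * (cmod (x $ i))\<^sup>2)"
  proof (rule sum_mono)
    fix i assume "i \<in> {..<n}"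
    then show "d i * (cmod (x $ i))\<^sup>2 \<le> t * (cmod (x $ i))\<^sup>2"
      using le[of i] by (cases "x $ i = 0") (auto simp: x_def intro: mult_right_mono)
  qed
  also have "\<dots> = t * (vnorm x)\<^sup>2"
    by (simp add: vnorm_sq_sum[OF x] sum_distrib_left)
  also have "\<dots> = t * (vnorm v)\<^sup>2"
    using vnorm_unitary[OF unitary_mat_adjoint[OF U] v] by (simp add: x_def)
  finally show ?thesis .
qed

lemma hermitian_quadratic_form_le:
  assumes H: "hermitian_mat n H" and bound: "\<And>\<mu>. eigenvalue H \<mu> \<Longrightarrow> cmod \<mu> \<le> c"
    and v: "v \<in> carrier_vec n"
  shows "\<bar>Re ((H *\<^sub>v v) \<bullet>c v)\<bar> \<le> c * (vnorm v)\<^sup>2"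
proof -
  obtain U d where U: "unitary_mat n U" and H_eq: "H = U * real_diag_mat n d * mat_adjoint U"
    using hermitian_spectral[OF H] by blast
  have d: "\<bar>d i\<bar> \<le> c" if "i < n" for i
  proof -
    have "vnorm (U *\<^sub>v unit_vec n i) = 1"
      using that by (simp add: vnorm_unitary[OF U] vnorm_unit_vec)
    then have "U *\<^sub>v unit_vec n i \<noteq> 0\<^sub>v n" by auto
    then have "eigenvector H (U *\<^sub>v unit_vec n i) (of_real (d i))"
      using that unitary_matD(1)[OF U] H_eq hermitian_matD(1)[OF H]
      by (auto simp: eigenvector_def eigenvector_unitary_diag[OF U])
    then show ?thesis using bound[of "of_real (d i)"] by (auto simp: eigenvalue_def)
  qed
  have d': "- c \<le> d i" "d i \<le> c" if "i < n" for i using d[OF that] by (simp_all add: abs_le_iff)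
  have "- c * (vnorm v)\<^sup>2 \<le> Re ((H *\<^sub>v v) \<bullet>c v)"
    unfolding H_eq using d' by (intro quadratic_form_unitary_diag_ge[OF U v])
  moreover have "Re ((H *\<^sub>v v) \<bullet>c v) \<le> c * (vnorm v)\<^sup>2"
    unfolding H_eq using d' by (intro quadratic_form_unitary_diag_le[OF U v])
  ultimately show ?thesis by linarith
qed

section \<open>Weyl's inequality\<close>

lemma sorted_desc_count:
  fixes d :: "nat \<Rightarrow> real" assumes j: "j < n"
  shows "j < card {i. i < n \<and> rev (sort (map d [0..<n])) ! j \<le> d i}"
    and "n - j \<le> card {i. i < n \<and> d i \<le> rev (sort (map d [0..<n])) ! j}"
proof -
  define L where "L = rev (sort (map d [0..<n]))"
  have mono: "L ! b \<le> L ! a" if "a \<le> b" "b < n" for a b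
    using that sorted_nth_mono[OF sorted_sort, of "n - Suc b" "n - Suc a" "map d [0..<n]"]
    by (simp add: L_def rev_nth)
  have count: "card {i. i < n \<and> P (d i)} = card {i. i < n \<and> P (L ! i)}" for P
  proof -
    have "card {i. i < n \<and> P (d i)} = length (filter P (map d [0..<n]))"
      by (auto simp: length_filter_conv_card intro!: arg_cong[where f=card])
    also have "\<dots> = length (filter P L)"
      by (metis L_def mset_filter mset_rev mset_sort size_mset)
    also have "\<dots> = card {i. i < n \<and> P (L ! i)}"
      by (simp add: L_def length_filter_conv_card)
    finally show ?thesis .
  qed
  have "card {0..j} \<le> card {i. i < n \<and> L ! j \<le> L ! i}"
    using mono j by (intro card_mono) auto
  then show "j < card {i. i < n \<and> rev (sort (map d [0..<n])) ! j \<le> d i}"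
    using count[of "\<lambda>x. L ! j \<le> x"] by (simp add: L_def)
  have "card {j..<n} \<le> card {i. i < n \<and> L ! i \<le> L ! j}"
    using mono j by (intro card_mono) auto
  then show "n - j \<le> card {i. i < n \<and> d i \<le> rev (sort (map d [0..<n])) ! j}"
    using count[of "\<lambda>x. x \<le> L ! j"] by (simp add: L_def)
qed

lemma exists_nonzero_orthogonal:
  assumes rs: "set rs \<subseteq> carrier_vec n" and len: "length rs < n"
  obtains w :: "complex vec" where "w \<in> carrier_vec n" "w \<noteq> 0\<^sub>v n" "\<And>\<rho>. \<rho> \<in> set rs \<Longrightarrow> \<rho> \<bullet> w = 0"
proof -
  define r where "r i = (if i < length rs then rs ! i else 0\<^sub>v n)" for i
  define E where "E = mat\<^sub>r n n (\<lambda>i. if i = n - 1 then 0\<^sub>v n else r i)"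
  have r: "r i \<in> carrier_vec n" for i using rs by (auto simp: r_def)
  have "det E = 0"
    unfolding E_def using len r by (intro det_row_0) auto
  then obtain w where w: "w \<in> carrier_vec n" "w \<noteq> 0\<^sub>v n" "E *\<^sub>v w = 0\<^sub>v n"
    using det_0_iff_vec_prod_zero_field[of E n] by (auto simp: E_def)
  have "\<rho> \<bullet> w = 0" if "\<rho> \<in> set rs" for \<rho>
  proof -
    obtain i where i: "i < length rs" "\<rho> = rs ! i" using \<open>\<rho> \<in> set rs\<close> by (auto simp: in_set_conv_nth)
    have "\<rho> \<in> carrier_vec n" using rs that by auto
    then have "row E i = \<rho>"
      unfolding E_def using i len by (subst row_mat_of_row_fun) (auto simp: r_def)
    then have "\<rho> \<bullet> w = (E *\<^sub>v w) $ i"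
      using i len by (simp add: E_def)
    then show ?thesis using w(3) i len by simp
  qed
  with w show ?thesis using that by blast
qed

lemma coordinate_subspaces_intersect:
  fixes U V :: "complex mat"
  assumes U: "U \<in> carrier_mat n n" and V: "V \<in> carrier_mat n n"
    and card: "n < card {i. i < n \<and> P i} + card {i. i < n \<and> Q i}"
  obtains w where "w \<in> carrier_vec n" "w \<noteq> 0\<^sub>v n"
    "\<And>i. i < n \<Longrightarrow> \<not> P i \<Longrightarrow> (mat_adjoint U *\<^sub>v w) $ i = 0"
    "\<And>i. i < n \<Longrightarrow> \<not> Q i \<Longrightarrow> (mat_adjoint V *\<^sub>v w) $ i = 0"
proof -
  define rs where
    "rs = map (row (mat_adjoint U)) (filter (\<lambda>i. \<not> P i) [0..<n])
      @ map (row (mat_adjoint V)) (filter (\<lambda>i. \<not> Q i) [0..<n])"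
  have filter_upt: "length (filter R [0..<n]) = card {i. i < n \<and> R i}" for R
    by (auto simp: length_filter_conv_card intro!: arg_cong[where f=card])
  have rs_length: "length rs < n"
    using card sum_length_filter_compl[of P "[0..<n]"] sum_length_filter_compl[of Q "[0..<n]"]
    unfolding filter_upt by (simp add: rs_def filter_upt)
  have rs_carrier: "set rs \<subseteq> carrier_vec n"
    using U V by (auto simp: rs_def)
  obtain w where w: "w \<in> carrier_vec n" "w \<noteq> 0\<^sub>v n"
    and orth: "\<And>\<rho>. \<rho> \<in> set rs \<Longrightarrow> \<rho> \<bullet> w = 0"
    using exists_nonzero_orthogonal[OF rs_carrier rs_length] by blast
  show ?thesis
    using that[OF w] orth[of "row (mat_adjoint U) _"] orth[of "row (mat_adjoint V) _"] U V
    by (auto simp: rs_def)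
qed

text \<open>Courant--Fischer: the eigenvectors of \<open>A\<close> for eigenvalues \<open>\<ge> \<lambda>\<^sub>j(A)\<close> and those of \<open>B\<close>
  for eigenvalues \<open>\<le> \<lambda>\<^sub>j(B)\<close> span subspaces of dimensions \<open>> j\<close> and \<open>\<ge> n - j\<close>,
  which therefore share a nonzero vector.\<close>

lemma eigs_desc_le_of_quadratic_form_le:
  assumes A: "hermitian_mat n A" and B: "hermitian_mat n B" and j: "j < n"
    and le: "\<And>v. v \<in> carrier_vec n \<Longrightarrow> Re ((A *\<^sub>v v) \<bullet>c v) \<le> Re ((B *\<^sub>v v) \<bullet>c v) + c * (vnorm v)\<^sup>2"
  shows "eigs_desc A ! j \<le> eigs_desc B ! j + c"
proof -
  obtain U a where U: "unitary_mat n U" and A_eq: "A = U * real_diag_mat n a * mat_adjoint U"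
    using hermitian_spectral[OF A] by blast
  obtain V b where V: "unitary_mat n V" and B_eq: "B = V * real_diag_mat n b * mat_adjoint V"
    using hermitian_spectral[OF B] by blast
  define \<alpha> where "\<alpha> = eigs_desc A ! j"
  define \<beta> where "\<beta> = eigs_desc B ! j"
  have card: "n < card {i. i < n \<and> \<alpha> \<le> a i} + card {i. i < n \<and> b i \<le> \<beta>}"
    using sorted_desc_count[OF j, of a] sorted_desc_count[OF j, of b]
    by (simp add: \<alpha>_def \<beta>_def A_eq B_eq eigs_desc_unitary_diag[OF U] eigs_desc_unitary_diag[OF V])
  obtain w where w: "w \<in> carrier_vec n" "w \<noteq> 0\<^sub>v n"
    and wU: "\<And>i. i < n \<Longrightarrow> \<not> \<alpha> \<le> a i \<Longrightarrow> (mat_adjoint U *\<^sub>v w) $ i = 0"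
    and wV: "\<And>i. i < n \<Longrightarrow> \<not> b i \<le> \<beta> \<Longrightarrow> (mat_adjoint V *\<^sub>v w) $ i = 0"
    using coordinate_subspaces_intersect[OF unitary_matD(1)[OF U] unitary_matD(1)[OF V] card] by blast
  have "\<alpha> * (vnorm w)\<^sup>2 \<le> Re ((A *\<^sub>v w) \<bullet>c w)"
    unfolding A_eq using wU by (intro quadratic_form_unitary_diag_ge[OF U w(1)]) blast
  moreover have "Re ((B *\<^sub>v w) \<bullet>c w) \<le> \<beta> * (vnorm w)\<^sup>2"
    unfolding B_eq using wV by (intro quadratic_form_unitary_diag_le[OF V w(1)]) blast
  moreover have "0 < (vnorm w)\<^sup>2" using w vnorm_eq_0_iff[OF w(1)] by simp
  ultimately have "\<alpha> * (vnorm w)\<^sup>2 \<le> (\<beta> + c) * (vnorm w)\<^sup>2"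
    using le[OF w(1)] by (simp add: algebra_simps)
  then show ?thesis using \<open>0 < (vnorm w)\<^sup>2\<close> by (simp add: \<alpha>_def \<beta>_def)
qed

theorem weyl_inequality:
  assumes A: "hermitian_mat n A" and B: "hermitian_mat n B" and j: "j < n"
    and bound: "\<And>\<mu>. eigenvalue (A - B) \<mu> \<Longrightarrow> cmod \<mu> \<le> c"
  shows "\<bar>eigs_desc A ! j - eigs_desc B ! j\<bar> \<le> c"
proof -
  have diff: "\<bar>Re ((A *\<^sub>v v) \<bullet>c v) - Re ((B *\<^sub>v v) \<bullet>c v)\<bar> \<le> c * (vnorm v)\<^sup>2"
    if v: "v \<in> carrier_vec n" for v
  proof -
    note A' = hermitian_matD(1)[OF A] and B' = hermitian_matD(1)[OF B]
    have "((A - B) *\<^sub>v v) \<bullet>c v = (A *\<^sub>v v) \<bullet>c v - (B *\<^sub>v v) \<bullet>c v"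
      using A' B' v by (simp add: minus_mult_distrib_mat_vec cscalar_prod_minus_left[of _ n])
    then show ?thesis
      using hermitian_quadratic_form_le[OF hermitian_mat_minus[OF A B] bound v] by simp
  qed
  have "Re ((A *\<^sub>v v) \<bullet>c v) \<le> Re ((B *\<^sub>v v) \<bullet>c v) + c * (vnorm v)\<^sup>2"
    "Re ((B *\<^sub>v v) \<bullet>c v) \<le> Re ((A *\<^sub>v v) \<bullet>c v) + c * (vnorm v)\<^sup>2"
    if "v \<in> carrier_vec n" for v
    using diff[OF that] by (simp_all add: abs_le_iff)
  then show ?thesis
    using eigs_desc_le_of_quadratic_form_le[OF A B j] eigs_desc_le_of_quadratic_form_le[OF B A j]
    by fastforce
qed

section \<open>The operator norm\<close>

lemma vnorm_mult_mat_vec_le_entry_sum: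
  assumes A: "A \<in> carrier_mat n m" and v: "v \<in> carrier_vec m"
  shows "vnorm (A *\<^sub>v v) \<le> (\<Sum>i<n. \<Sum>l<m. cmod (A $$ (i,l))) * vnorm v"
proof -
  have row: "cmod ((A *\<^sub>v v) $ i) \<le> (\<Sum>l<m. cmod (A $$ (i,l))) * vnorm v" if "i < n" for i
  proof -
    have "cmod ((A *\<^sub>v v) $ i) \<le> (\<Sum>l<m. cmod (A $$ (i,l)) * cmod (v $ l))"
      using A v that by (auto simp: index_mult_mat_vec_sum[of _ n m] norm_mult
          simp del: index_mult_mat_vec intro: order_trans[OF norm_sum])
    also have "\<dots> \<le> (\<Sum>l<m. cmod (A $$ (i,l)) * vnorm v)"
      using v by (intro sum_mono mult_left_mono vnorm_index_le) auto
    finally show ?thesis by (simp add: sum_distrib_right)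
  qed
  have "vnorm (A *\<^sub>v v) \<le> (\<Sum>i<n. cmod ((A *\<^sub>v v) $ i))"
    using A unfolding vnorm_L2_set by (auto intro: L2_set_le_sum simp del: index_mult_mat_vec)
  also have "\<dots> \<le> (\<Sum>i<n. (\<Sum>l<m. cmod (A $$ (i,l))) * vnorm v)"
    by (intro sum_mono row) simp
  finally show ?thesis by (simp add: sum_distrib_right)
qed

lemma opnorm_bdd_above:
  assumes A: "A \<in> carrier_mat n m"
  shows "bdd_above {vnorm (A *\<^sub>v v) | v. v \<in> carrier_vec (dim_col A) \<and> vnorm v \<le> 1}"
proof (rule bdd_aboveI)
  let ?K = "\<Sum>i<n. \<Sum>l<m. cmod (A $$ (i,l))"
  fix x assume "x \<in> {vnorm (A *\<^sub>v v) | v. v \<in> carrier_vec (dim_col A) \<and> vnorm v \<le> 1}"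
  then obtain v where v: "v \<in> carrier_vec m" "vnorm v \<le> 1" "x = vnorm (A *\<^sub>v v)" using A by auto
  have "x \<le> ?K * vnorm v" using vnorm_mult_mat_vec_le_entry_sum[OF A v(1)] v(3) by simp
  also have "\<dots> \<le> ?K" using v(2) by (simp add: mult_left_le sum_nonneg)
  finally show "x \<le> ?K" .
qed

lemma vnorm_mult_mat_vec_le:
  assumes A: "A \<in> carrier_mat n m" and v: "v \<in> carrier_vec m"
  shows "vnorm (A *\<^sub>v v) \<le> opnorm A * vnorm v"
proof (cases "vnorm v = 0")
  case True
  then show ?thesis using vnorm_mult_mat_vec_le_entry_sum[OF A v] by simp
next
  case False
  then have pos: "0 < vnorm v" using vnorm_nonneg[of v] by linarith
  define u where "u = of_real (1 / vnorm v) \<cdot>\<^sub>v v"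
  have "vnorm u = 1" "u \<in> carrier_vec m" using pos v by (simp_all add: u_def vnorm_smult norm_divide)
  then have "vnorm (A *\<^sub>v u) \<le> opnorm A"
    unfolding opnorm_def using A by (intro cSup_upper[OF _ opnorm_bdd_above[OF A]]) auto
  moreover have "vnorm (A *\<^sub>v u) = vnorm (A *\<^sub>v v) / vnorm v"
    using A v pos by (simp add: u_def mult_mat_vec[of _ n m] vnorm_smult norm_divide)
  ultimately show ?thesis using pos by (simp add: divide_le_eq mult.commute)
qed

lemma opnorm_nonneg:
  assumes A: "A \<in> carrier_mat n m" shows "0 \<le> opnorm A"
proof -
  have "vnorm (A *\<^sub>v 0\<^sub>v m) \<in> {vnorm (A *\<^sub>v v) | v. v \<in> carrier_vec (dim_col A) \<and> vnorm v \<le> 1}"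
    using A by auto
  then have "vnorm (A *\<^sub>v 0\<^sub>v m) \<le> opnorm A"
    unfolding opnorm_def by (rule cSup_upper[OF _ opnorm_bdd_above[OF A]])
  then show ?thesis using vnorm_nonneg order_trans by blast
qed

lemma opnorm_le:
  assumes A: "A \<in> carrier_mat n m" and c: "0 \<le> c"
    and le: "\<And>v. v \<in> carrier_vec m \<Longrightarrow> vnorm (A *\<^sub>v v) \<le> c * vnorm v"
  shows "opnorm A \<le> c"
  unfolding opnorm_def
proof (rule cSup_least)
  show "{vnorm (A *\<^sub>v v) | v. v \<in> carrier_vec (dim_col A) \<and> vnorm v \<le> 1} \<noteq> {}"
    using A by (auto intro!: exI[of _ "0\<^sub>v m"])
  fix x assume "x \<in> {vnorm (A *\<^sub>v v) | v. v \<in> carrier_vec (dim_col A) \<and> vnorm v \<le> 1}"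
  then obtain v where v: "v \<in> carrier_vec m" "vnorm v \<le> 1" "x = vnorm (A *\<^sub>v v)" using A by auto
  have "c * vnorm v \<le> c" using c v(2) by (simp add: mult_left_le)
  then show "x \<le> c" using le[OF v(1)] v(3) by linarith
qed

lemma opnorm_add_le:
  assumes A: "A \<in> carrier_mat n m" and B: "B \<in> carrier_mat n m"
  shows "opnorm (A + B) \<le> opnorm A + opnorm B"
proof (rule opnorm_le)
  fix v :: "complex vec" assume v: "v \<in> carrier_vec m"
  have "vnorm ((A + B) *\<^sub>v v) \<le> vnorm (A *\<^sub>v v) + vnorm (B *\<^sub>v v)"
    using A B v by (simp add: add_mult_distrib_mat_vec vnorm_add[of _ n])
  also have "\<dots> \<le> (opnorm A + opnorm B) * vnorm v"
    using vnorm_mult_mat_vec_le[OF A v] vnorm_mult_mat_vec_le[OF B v] by (simp add: distrib_right)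
  finally show "vnorm ((A + B) *\<^sub>v v) \<le> (opnorm A + opnorm B) * vnorm v" .
qed (use A B opnorm_nonneg in auto)

lemma opnorm_mult_le_split:
  assumes X: "X \<in> carrier_mat n n" and X0: "X0 \<in> carrier_mat n n" and D: "D \<in> carrier_mat n m"
  shows "opnorm (X * D) \<le> opnorm (X0 * D) + opnorm ((X - X0) * D)"
proof -
  have "X0 + (X - X0) = X" using X X0 by (intro eq_matI) auto
  then have "X * D = X0 * D + (X - X0) * D"
    using add_mult_distrib_mat[OF X0 minus_carrier_mat[OF X0, of X] D] by simp
  then show ?thesis
    using X X0 D by (simp add: opnorm_add_le[of _ n m] mult_carrier_mat[of _ n n] minus_carrier_mat)
qed

lemma eigenvalue_cmod_le_opnorm:
  assumes A: "A \<in> carrier_mat n n" and "eigenvalue A \<mu>"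
  shows "cmod \<mu> \<le> opnorm A"
proof -
  obtain v where v: "v \<in> carrier_vec n" "v \<noteq> 0\<^sub>v n" "A *\<^sub>v v = \<mu> \<cdot>\<^sub>v v"
    using assms by (auto simp: eigenvalue_def eigenvector_def)
  then have "0 < vnorm v" using vnorm_eq_0_iff[OF v(1)] vnorm_nonneg[of v] by linarith
  moreover have "cmod \<mu> * vnorm v \<le> opnorm A * vnorm v"
    using vnorm_mult_mat_vec_le[OF A v(1)] v(3) by (simp add: vnorm_smult)
  ultimately show ?thesis by simp
qed

lemma opnorm_mat_adjoint_le:
  assumes A: "A \<in> carrier_mat n m" shows "opnorm (mat_adjoint A) \<le> opnorm A"
proof (rule opnorm_le[OF mat_adjoint_carrier[OF A] opnorm_nonneg[OF A]])
  fix v :: "complex vec" assume v: "v \<in> carrier_vec n"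
  define w where "w = mat_adjoint A *\<^sub>v v"
  have w: "w \<in> carrier_vec m" using A v by (simp add: w_def)
  have "(A *\<^sub>v w) \<bullet>c v = w \<bullet>c w"
    using mat_adjoint_cscalar_prod[OF A w v] by (simp add: w_def)
  then have "(vnorm w)\<^sup>2 = cmod ((A *\<^sub>v w) \<bullet>c v)"
    by (simp add: cscalar_prod_self del: of_real_power)
  also have "\<dots> \<le> vnorm (A *\<^sub>v w) * vnorm v"
    using A v w by (intro cmod_cscalar_prod_le[of _ n]) auto
  also have "\<dots> \<le> opnorm A * vnorm w * vnorm v"
    using vnorm_mult_mat_vec_le[OF A w] by (simp add: mult_right_mono)
  finally have "vnorm w * vnorm w \<le> vnorm w * (opnorm A * vnorm v)"
    by (simp add: power2_eq_square mult_ac)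
  then show "vnorm (mat_adjoint A *\<^sub>v v) \<le> opnorm A * vnorm v"
    using opnorm_nonneg[OF A] unfolding w_def[symmetric]
    by (cases "vnorm w = 0") (simp_all add: mult_le_cancel_left_pos order_less_le)
qed

lemma opnorm_mat_adjoint:
  "A \<in> carrier_mat n m \<Longrightarrow> opnorm (mat_adjoint A) = opnorm A"
  using opnorm_mat_adjoint_le[of A n m] opnorm_mat_adjoint_le[of "mat_adjoint A" m n] by simp

lemma opnorm_mult_hermitian_commute:
  assumes "hermitian_mat n A" "hermitian_mat n B"
  shows "opnorm (A * B) = opnorm (B * A)"
proof -
  note A = hermitian_matD[OF assms(1)] and B = hermitian_matD[OF assms(2)]
  have "mat_adjoint (A * B) = B * A"
    using A B by (simp add: mat_adjoint_mult[of _ n n _ n])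
  then show ?thesis
    using opnorm_mat_adjoint[of "A * B" n n] A(1) B(1) by (simp add: mult_carrier_mat[of _ n n])
qed

section \<open>Entrywise conjugation\<close>

lemma mconj_index [simp]:
  "i < dim_row A \<Longrightarrow> j < dim_col A \<Longrightarrow> mconj A $$ (i,j) = cnj (A $$ (i,j))"
  "dim_row (mconj A) = dim_row A" "dim_col (mconj A) = dim_col A"
  unfolding mconj_def by simp_all

lemma mconj_carrier [simp]: "A \<in> carrier_mat n m \<Longrightarrow> mconj A \<in> carrier_mat n m"
  by (intro carrier_matI) auto

lemma mconj_mconj [simp]: "mconj (mconj A) = A"
  by (rule eq_matI) simp_all

lemma mconj_minus:
  "A \<in> carrier_mat n m \<Longrightarrow> B \<in> carrier_mat n m \<Longrightarrow> mconj (A - B) = mconj A - mconj B"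
  by (rule eq_matI) auto

lemma mconj_mult:
  assumes A: "A \<in> carrier_mat n m" and B: "B \<in> carrier_mat m k"
  shows "mconj (A * B) = mconj A * mconj B"
proof (rule eq_matI)
  fix i j assume "i < dim_row (mconj A * mconj B)" "j < dim_col (mconj A * mconj B)"
  then have ij: "i < n" "j < k" using A B by auto
  then show "mconj (A * B) $$ (i,j) = (mconj A * mconj B) $$ (i,j)"
    using A B by (auto simp: index_mult_mat_sum[of _ n m _ k] simp del: index_mult_mat(1) intro!: sum.cong)
qed (use A B in auto)

lemma mat_adjoint_mconj: "A \<in> carrier_mat n m \<Longrightarrow> mat_adjoint (mconj A) = mconj (mat_adjoint A)"
  by (rule eq_matI) auto

lemma mconj_mult_vec:
  assumes A: "A \<in> carrier_mat n m" and v: "v \<in> carrier_vec m"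
  shows "mconj A *\<^sub>v v = conjugate (A *\<^sub>v conjugate v)"
  using assms by (intro eq_vecI) (auto simp: index_mult_mat_vec_sum[of _ n m] simp del: index_mult_mat_vec)

lemma opnorm_mconj:
  assumes A: "A \<in> carrier_mat n m" shows "opnorm (mconj A) = opnorm A"
proof -
  have le: "opnorm (mconj B) \<le> opnorm B" if B: "B \<in> carrier_mat n m" for B
  proof (rule opnorm_le[OF mconj_carrier[OF B] opnorm_nonneg[OF B]])
    fix v :: "complex vec" assume v: "v \<in> carrier_vec m"
    show "vnorm (mconj B *\<^sub>v v) \<le> opnorm B * vnorm v"
      using vnorm_mult_mat_vec_le[OF B, of "conjugate v"] v by (simp add: mconj_mult_vec[OF B v])
  qed
  show ?thesis using le[OF A] le[OF mconj_carrier[OF A]] by simp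
qed

lemma hermitian_mconj: "hermitian_mat n A \<Longrightarrow> hermitian_mat n (mconj A)"
  unfolding hermitian_mat_def by (auto simp: mat_adjoint_mconj[of _ n n])

lemma psd_mconj:
  assumes A: "psd_mat n A" shows "psd_mat n (mconj A)"
proof -
  have A': "A \<in> carrier_mat n n" using A by (simp add: psd_mat_def hermitian_mat_def)
  show ?thesis
    unfolding psd_mat_def
  proof (intro conjI ballI)
    show "hermitian_mat n (mconj A)" using A by (simp add: psd_mat_def hermitian_mconj)
    fix v :: "complex vec" assume v: "v \<in> carrier_vec n"
    have "(mconj A *\<^sub>v v) \<bullet>c v = cnj ((A *\<^sub>v conjugate v) \<bullet>c conjugate v)"
      using v A' conjugate_sprod_vec[of "A *\<^sub>v conjugate v" n v] by (simp add: mconj_mult_vec[OF A'])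
    moreover have "0 \<le> Re ((A *\<^sub>v conjugate v) \<bullet>c conjugate v)"
      using A carrier_vec_conjugate[OF v] unfolding psd_mat_def by blast
    ultimately show "0 \<le> Re ((mconj A *\<^sub>v v) \<bullet>c v)" by simp
  qed
qed

section \<open>Square roots of positive semidefinite matrices\<close>

lemma psd_spectral:
  assumes A: "psd_mat n A"
  obtains U d where "unitary_mat n U" "A = U * real_diag_mat n d * mat_adjoint U" "\<And>i. i < n \<Longrightarrow> 0 \<le> d i"
proof -
  obtain U d where U: "unitary_mat n U" and A_eq: "A = U * real_diag_mat n d * mat_adjoint U"
    using hermitian_spectral[OF psd_mat_hermitian[OF A]] by blast
  then show ?thesis using that A psd_unitary_diag_iff[OF U] by blast
qed

lemma mult_eq_sqrt_mult:
  assumes "0 \<le> a" "0 \<le> c" and "of_real (a * a) * z = of_real c * (z :: complex)"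
  shows "of_real a * z = of_real (sqrt c) * z"
proof (cases "z = 0")
  case False
  then have "a * a = c" using assms(3) by (simp del: of_real_mult)
  then have "sqrt c = a" using assms(1) by (auto simp flip: \<open>a * a = c\<close>)
  then show ?thesis by simp
qed simp

lemma real_diag_sqrt_eigenvector:
  assumes e: "\<And>i. i < n \<Longrightarrow> 0 \<le> e i" and c: "0 \<le> c" and y: "y \<in> carrier_vec n"
    and EEy: "real_diag_mat n e *\<^sub>v (real_diag_mat n e *\<^sub>v y) = of_real c \<cdot>\<^sub>v y"
  shows "real_diag_mat n e *\<^sub>v y = of_real (sqrt c) \<cdot>\<^sub>v y"
proof (rule eq_vecI)
  fix i assume "i < dim_vec (of_real (sqrt c) \<cdot>\<^sub>v y)"
  then have i: "i < n" using y by simp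
  have "of_real (e i * e i) * y $ i = of_real c * y $ i"
    using arg_cong[OF EEy, of "\<lambda>w. w $ i"] i y
    by (simp add: index_mult_mat_diag_vec mult_mat_vec_carrier[of _ n n] del: index_mult_mat_vec)
  from mult_eq_sqrt_mult[OF e[OF i] c this]
  show "(real_diag_mat n e *\<^sub>v y) $ i = (of_real (sqrt c) \<cdot>\<^sub>v y) $ i"
    using i y by (simp add: index_mult_mat_diag_vec del: index_mult_mat_vec)
qed (use y in simp)

lemma psd_sqrt_eigenvector:
  assumes T: "psd_mat n T" and u: "u \<in> carrier_vec n" and c: "0 \<le> c"
    and TTu: "T *\<^sub>v (T *\<^sub>v u) = of_real c \<cdot>\<^sub>v u"
  shows "T *\<^sub>v u = of_real (sqrt c) \<cdot>\<^sub>v u"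
proof -
  obtain V e where V: "unitary_mat n V" and T_eq: "T = V * real_diag_mat n e * mat_adjoint V"
    and e: "\<And>i. i < n \<Longrightarrow> 0 \<le> e i"
    using psd_spectral[OF T] by blast
  note V' = unitary_matD(1)[OF V]
  define y where "y = mat_adjoint V *\<^sub>v u"
  have y: "y \<in> carrier_vec n" using V' u by (simp add: y_def)
  have Tw: "T *\<^sub>v w = V *\<^sub>v (real_diag_mat n e *\<^sub>v (mat_adjoint V *\<^sub>v w))"
    if "w \<in> carrier_vec n" for w
    using V' that by (simp add: T_eq mult_mat_vec_assoc3)
  have Ey: "real_diag_mat n e *\<^sub>v y \<in> carrier_vec n" and EEy: "real_diag_mat n e *\<^sub>v (real_diag_mat n e *\<^sub>v y) \<in> carrier_vec n"
    using y by (simp_all add: mult_mat_vec_carrier[of _ n n])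
  have Tu: "T *\<^sub>v u = V *\<^sub>v (real_diag_mat n e *\<^sub>v y)"
    unfolding Tw[OF u] y_def ..
  have "T *\<^sub>v (T *\<^sub>v u) = V *\<^sub>v (real_diag_mat n e *\<^sub>v (mat_adjoint V *\<^sub>v (V *\<^sub>v (real_diag_mat n e *\<^sub>v y))))"
    unfolding Tu by (rule Tw, rule mult_mat_vec_carrier[OF V' Ey])
  then have "T *\<^sub>v (T *\<^sub>v u) = V *\<^sub>v (real_diag_mat n e *\<^sub>v (real_diag_mat n e *\<^sub>v y))"
    by (simp only: unitary_mat_cancel(2)[OF V Ey])
  then have "real_diag_mat n e *\<^sub>v (real_diag_mat n e *\<^sub>v y) = mat_adjoint V *\<^sub>v (T *\<^sub>v (T *\<^sub>v u))"
    using EEy by (simp add: unitary_mat_cancel(2)[OF V])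
  also have "\<dots> = of_real c \<cdot>\<^sub>v y"
    using V' u by (simp add: TTu y_def mult_mat_vec[of _ n n])
  finally have "real_diag_mat n e *\<^sub>v y = of_real (sqrt c) \<cdot>\<^sub>v y"
    using real_diag_sqrt_eigenvector[of n e c y] e c y by blast
  then show ?thesis
    using V' y u by (simp add: Tu mult_mat_vec[of _ n n] y_def unitary_mat_cancel[OF V])
qed

lemma psd_sqrt_unique_diag:
  assumes U: "unitary_mat n U" and d: "\<And>i. i < n \<Longrightarrow> 0 \<le> d i"
    and T: "psd_mat n T" and TT: "T * T = U * real_diag_mat n d * mat_adjoint U"
  shows "T = U * real_diag_mat n (\<lambda>i. sqrt (d i)) * mat_adjoint U"
proof -
  define S where "S = U * real_diag_mat n (\<lambda>i. sqrt (d i)) * mat_adjoint U"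
  note U' = unitary_matD[OF U]
  have T': "T \<in> carrier_mat n n" using T by (simp add: psd_mat_def hermitian_mat_def)
  have S': "S \<in> carrier_mat n n" using U' by (simp add: S_def mult_carrier_mat[of _ n n])
  have "T * U = S * U"
  proof (rule mat_col_eqI)
    fix k assume "k < dim_col (S * U)"
    then have k: "k < n" using U' S' by simp
    have Uk: "U *\<^sub>v unit_vec n k \<in> carrier_vec n" using U' by simp
    have "T *\<^sub>v (T *\<^sub>v (U *\<^sub>v unit_vec n k)) = (T * T) *\<^sub>v (U *\<^sub>v unit_vec n k)"
      by (rule assoc_mult_mat_vec[OF T' T' Uk, symmetric])
    also have "\<dots> = of_real (d k) \<cdot>\<^sub>v (U *\<^sub>v unit_vec n k)"
      unfolding TT by (rule eigenvector_unitary_diag[OF U k])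
    finally have "T *\<^sub>v (U *\<^sub>v unit_vec n k) = of_real (sqrt (d k)) \<cdot>\<^sub>v (U *\<^sub>v unit_vec n k)"
      by (rule psd_sqrt_eigenvector[OF T Uk d[OF k]])
    then have "T *\<^sub>v (U *\<^sub>v unit_vec n k) = S *\<^sub>v (U *\<^sub>v unit_vec n k)"
      unfolding S_def eigenvector_unitary_diag[OF U k] .
    then show "col (T * U) k = col (S * U) k"
      unfolding col_mult2[OF T' U'(1) k] col_mult2[OF S' U'(1) k]
        mult_mat_vec_unit_vec[OF U'(1) k, symmetric] .
  qed (use T' S' U' in simp_all)
  have "T = T * (U * mat_adjoint U)"
    using T' U' by simp
  also have "\<dots> = S * U * mat_adjoint U"
    using \<open>T * U = S * U\<close> by (simp flip: assoc_mult_mat[OF T' U'(1) mat_adjoint_carrier[OF U'(1)]])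
  also have "\<dots> = S * (U * mat_adjoint U)"
    by (rule assoc_mult_mat[OF S' U'(1) mat_adjoint_carrier[OF U'(1)]])
  also have "\<dots> = S"
    using S' U' by simp
  finally show ?thesis unfolding S_def .
qed

lemma msqrt_unique:
  assumes A: "psd_mat n A" and T: "psd_mat n T" and TT: "T * T = A"
  shows "msqrt A = T"
proof -
  obtain U d where U: "unitary_mat n U" and A_eq: "A = U * real_diag_mat n d * mat_adjoint U"
    and d: "\<And>i. i < n \<Longrightarrow> 0 \<le> d i"
    using psd_spectral[OF A] by blast
  have T_eq: "T = U * real_diag_mat n (\<lambda>i. sqrt (d i)) * mat_adjoint U"
    by (rule psd_sqrt_unique_diag[OF U d T TT[unfolded A_eq]])
  have unique: "S = T" if "psd_mat n S" "S * S = A" for S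
    unfolding T_eq by (rule psd_sqrt_unique_diag[OF U d that(1) that(2)[unfolded A_eq]])
  have "dim_row A = n" using hermitian_matD(1)[OF psd_mat_hermitian[OF A]] by simp
  then show ?thesis
    unfolding msqrt_def
  proof (intro the_equality)
    show "psd_mat (dim_row A) T \<and> T * T = A" using T TT \<open>dim_row A = n\<close> by simp
  qed (use unique \<open>dim_row A = n\<close> in blast)
qed

lemma unitary_diag_mult:
  assumes U: "unitary_mat n U" and that: "D \<in> carrier_mat n n" "E \<in> carrier_mat n n"
  shows "U * D * mat_adjoint U * (U * E * mat_adjoint U) = U * (D * E) * mat_adjoint U"
proof -
  note U' = unitary_matD[OF U]
  have "U * D * mat_adjoint U * (U * E * mat_adjoint U) = U * D * (mat_adjoint U * U) * E * mat_adjoint U"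
    using U'(1) that by (simp add: assoc_mult_mat[of _ n n _ n _ n] mult_carrier_mat[of _ n n])
  then show ?thesis using U' that by (simp add: assoc_mult_mat[of _ n n _ n _ n])
qed

lemma msqrt_psd_square:
  assumes A: "psd_mat n A"
  shows "psd_mat n (msqrt A)" "msqrt A * msqrt A = A"
proof -
  obtain U d where U: "unitary_mat n U" and A_eq: "A = U * real_diag_mat n d * mat_adjoint U"
    and d: "\<And>i. i < n \<Longrightarrow> 0 \<le> d i"
    using psd_spectral[OF A] by blast
  define S where "S = U * real_diag_mat n (\<lambda>i. sqrt (d i)) * mat_adjoint U"
  note U' = unitary_matD[OF U]
  have S: "psd_mat n S" using d by (simp add: S_def psd_unitary_diag_iff[OF U])
  have "real_diag_mat n (\<lambda>i. sqrt (d i)) * real_diag_mat n (\<lambda>i. sqrt (d i)) = real_diag_mat n d"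
    using d by (auto intro!: eq_matI simp flip: of_real_mult)
  then have "S * S = A"
    using unitary_diag_mult[OF U] by (simp add: S_def A_eq)
  then show "psd_mat n (msqrt A)" "msqrt A * msqrt A = A"
    using msqrt_unique[OF A S] S by simp_all
qed

lemma msqrt_mconj:
  assumes A: "psd_mat n A" shows "msqrt (mconj A) = mconj (msqrt A)"
proof (rule msqrt_unique[OF psd_mconj[OF A] psd_mconj[OF msqrt_psd_square(1)[OF A]]])
  have "msqrt A \<in> carrier_mat n n" using msqrt_psd_square(1)[OF A] by (simp add: psd_mat_def hermitian_mat_def)
  then show "mconj (msqrt A) * mconj (msqrt A) = mconj A"
    using msqrt_psd_square(2)[OF A] by (simp flip: mconj_mult[of _ n n _ n])
qed

section \<open>Eigenvalues of sandwiched products\<close>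

text \<open>The block matrices \<open>[AB 0; B 0]\<close> and \<open>[0 0; B BA]\<close> are conjugate by \<open>[I A; 0 I]\<close>.\<close>

lemma char_poly_mult_commute:
  assumes A: "(A :: complex mat) \<in> carrier_mat n n" and B: "B \<in> carrier_mat n n"
  shows "char_poly (A * B) = char_poly (B * A)"
proof -
  let ?Z = "0\<^sub>m n n :: complex mat" and ?I = "1\<^sub>m n :: complex mat"
  define X where "X = four_block_mat (A * B) ?Z B ?Z"
  define Y where "Y = four_block_mat ?Z ?Z B (B * A)"
  have AB: "A * B \<in> carrier_mat n n" and BA: "B * A \<in> carrier_mat n n" using A B by auto
  have "similar_mat X Y"
  proof -
    define P where "P = four_block_mat ?I A ?Z ?I"
    define Q where "Q = four_block_mat ?I (- A) ?Z ?I"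
    note mult_blocks = mult_four_block_mat[of _ n n _ n _ n _ _ n _ n]
    have [simp]: "- ?Z + ?I = ?I" "A + - A = ?Z" "- A + A = ?Z"
      using A by (auto intro!: eq_matI)
    have PQ: "P * Q = 1\<^sub>m (n + n)" "Q * P = 1\<^sub>m (n + n)"
      using A by (simp_all add: P_def Q_def mult_blocks)
    have "P * Y = four_block_mat (A * B) (A * (B * A)) B (B * A)"
      using A B BA by (simp add: P_def Y_def mult_blocks)
    also have "\<dots> = X * P"
      using A B AB by (simp add: X_def P_def mult_blocks assoc_mult_mat[of _ n n _ n _ n])
    finally have "P * Y = X * P" .
    moreover have carrier: "X \<in> carrier_mat (n + n) (n + n)" "Y \<in> carrier_mat (n + n) (n + n)"
      "P \<in> carrier_mat (n + n) (n + n)" "Q \<in> carrier_mat (n + n) (n + n)"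
      using AB BA by (simp_all add: X_def Y_def P_def Q_def)
    ultimately have "P * Y * Q = X * (P * Q)" by (simp add: assoc_mult_mat[of _ "n + n" "n + n"])
    then have "X = P * Y * Q" using PQ carrier by simp
    from similar_mat_witI[OF PQ this carrier] show ?thesis
      unfolding similar_mat_def by blast
  qed
  have linear: "\<exists>es. char_poly M = (\<Prod>a\<leftarrow>es. [:- a, 1:])" if "M \<in> carrier_mat n n" for M :: "complex mat"
    using char_poly_factorized[OF that] by blast
  have "char_poly X = char_poly (A * B) * char_poly ?Z"
    unfolding X_def by (rule char_poly_0_block'[OF refl linear[OF AB] linear[OF zero_carrier_mat] AB B zero_carrier_mat])
  moreover have "char_poly Y = char_poly ?Z * char_poly (B * A)"
    unfolding Y_def by (rule char_poly_0_block'[OF refl linear[OF zero_carrier_mat] linear[OF BA] zero_carrier_mat B BA])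
  moreover have "char_poly X = char_poly Y"
    using \<open>similar_mat X Y\<close> by (rule char_poly_similar)
  moreover have "char_poly ?Z \<noteq> 0"
    using degree_monic_char_poly[of ?Z n] by auto
  ultimately show ?thesis by (simp add: mult.commute)
qed

lemma char_poly_sandwich:
  assumes S: "S \<in> carrier_mat n n" and X: "(X :: complex mat) \<in> carrier_mat n n"
  shows "char_poly (S * X * S) = char_poly (S * S * X)"
proof -
  have "char_poly (S * X * S) = char_poly (S * (X * S))"
    using S X by (simp add: assoc_mult_mat[of _ n n _ n _ n])
  also have "\<dots> = char_poly (X * S * S)"
    using S X by (simp add: char_poly_mult_commute[of S n "X * S"])
  also have "\<dots> = char_poly (X * (S * S))"
    using S X by (simp add: assoc_mult_mat[of _ n n _ n _ n])
  also have "\<dots> = char_poly (S * S * X)"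
    using S X by (simp add: char_poly_mult_commute[of X n "S * S"])
  finally show ?thesis .
qed

lemma eigs_desc_msqrt_sandwich_swap:
  assumes M: "psd_mat n M" and N: "psd_mat n N"
  shows "eigs_desc (msqrt N * M * msqrt N) = eigs_desc (msqrt M * N * msqrt M)"
proof -
  note M' = hermitian_matD(1)[OF psd_mat_hermitian[OF M]]
    and N' = hermitian_matD(1)[OF psd_mat_hermitian[OF N]]
    and sM = hermitian_matD(1)[OF psd_mat_hermitian[OF msqrt_psd_square(1)[OF M]]]
    and sN = hermitian_matD(1)[OF psd_mat_hermitian[OF msqrt_psd_square(1)[OF N]]]
  have "char_poly (msqrt N * M * msqrt N) = char_poly (N * M)"
    using char_poly_sandwich[OF sN M'] by (simp add: msqrt_psd_square(2)[OF N])
  also have "\<dots> = char_poly (M * N)"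
    by (rule char_poly_mult_commute[OF N' M'])
  also have "\<dots> = char_poly (msqrt M * N * msqrt M)"
    using char_poly_sandwich[OF sM N'] by (simp add: msqrt_psd_square(2)[OF M])
  finally show ?thesis by (simp add: eigs_desc_def)
qed

lemma eigs_desc_diff_le_opnorm:
  assumes A: "hermitian_mat n A" and B: "hermitian_mat n B" and j: "j < n"
    and Z: "Z \<in> carrier_mat n n" and cp: "char_poly (A - B) = char_poly Z"
  shows "\<bar>eigs_desc A ! j - eigs_desc B ! j\<bar> \<le> opnorm Z"
proof (rule weyl_inequality[OF A B j])
  fix \<mu> assume "eigenvalue (A - B) \<mu>"
  then have "eigenvalue Z \<mu>"
    using hermitian_matD(1)[OF hermitian_mat_minus[OF A B]] Z cp
    by (simp add: eigenvalue_root_char_poly)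
  then show "cmod \<mu> \<le> opnorm Z" by (rule eigenvalue_cmod_le_opnorm[OF Z])
qed

lemma sandwich_minus:
  assumes "S \<in> carrier_mat n n" "X \<in> carrier_mat n n" "(Y :: complex mat) \<in> carrier_mat n n"
  shows "S * X * S - S * Y * S = S * (X - Y) * S"
  using assms by (simp add: mult_minus_distrib_mat[of _ n n] minus_mult_distrib_mat[of _ n n])

lemma eigs_desc_sandwich_diff_le:
  assumes S: "hermitian_mat n S" and X: "hermitian_mat n X" and Y: "hermitian_mat n Y" and j: "j < n"
  shows "\<bar>eigs_desc (S * X * S) ! j - eigs_desc (S * Y * S) ! j\<bar> \<le> opnorm (S * (X - Y) * S)"
proof (rule eigs_desc_diff_le_opnorm[OF hermitian_mat_sandwich[OF S X] hermitian_mat_sandwich[OF S Y] j])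
  note S' = hermitian_matD(1)[OF S] and X' = hermitian_matD(1)[OF X] and Y' = hermitian_matD(1)[OF Y]
  show "S * (X - Y) * S \<in> carrier_mat n n"
    using S' X' Y' by (intro mult_carrier_mat[of _ n n]) auto
  show "char_poly (S * X * S - S * Y * S) = char_poly (S * (X - Y) * S)"
    by (simp only: sandwich_minus[OF S' X' Y'])
qed

lemma eigs_desc_msqrt_sandwich_diff_le:
  assumes N: "psd_mat n N" and X: "hermitian_mat n X" and Y: "hermitian_mat n Y" and j: "j < n"
  shows "\<bar>eigs_desc (msqrt N * X * msqrt N) ! j - eigs_desc (msqrt N * Y * msqrt N) ! j\<bar>
    \<le> opnorm (N * (X - Y))"
proof -
  note S = psd_mat_hermitian[OF msqrt_psd_square(1)[OF N]]
  note X' = hermitian_matD(1)[OF X] and Y' = hermitian_matD(1)[OF Y] and S' = hermitian_matD(1)[OF S]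
  have XY: "X - Y \<in> carrier_mat n n" using Y' by (rule minus_carrier_mat)
  have "char_poly (msqrt N * X * msqrt N - msqrt N * Y * msqrt N) = char_poly (msqrt N * (X - Y) * msqrt N)"
    by (simp only: sandwich_minus[OF S' X' Y'])
  also have "\<dots> = char_poly (N * (X - Y))"
    unfolding char_poly_sandwich[OF S' XY] msqrt_psd_square(2)[OF N] ..
  finally show ?thesis
    using XY hermitian_matD(1)[OF psd_mat_hermitian[OF N]]
    by (intro eigs_desc_diff_le_opnorm[OF hermitian_mat_sandwich[OF S X] hermitian_mat_sandwich[OF S Y] j])
      (simp_all add: mult_carrier_mat[of _ n n])
qed

lemma sandwich_perturbation_bound_M_first:
  fixes M M' M0 M0' :: "complex mat"
  assumes M: "psd_mat n M" and M': "psd_mat n M'" and M0: "psd_mat n M0" and M0': "psd_mat n M0'"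
    and j: "j < n"
  shows "\<bar>eigs_desc (msqrt (mconj M') * M * msqrt (mconj M')) ! j
          - eigs_desc (msqrt (mconj M0') * M0 * msqrt (mconj M0')) ! j\<bar>
     \<le> opnorm (mconj M0' * (M - M0)) + opnorm (msqrt (mconj M0) * (M' - M0') * msqrt (mconj M0))
       + opnorm (mconj (M' - M0') * (M - M0))"
proof -
  note hM = psd_mat_hermitian[OF M] and hM0 = psd_mat_hermitian[OF M0]
  note cM = hermitian_matD(1)[OF hM] and cM0 = hermitian_matD(1)[OF hM0]
    and cM' = hermitian_matD(1)[OF psd_mat_hermitian[OF M']]
    and cM0' = hermitian_matD(1)[OF psd_mat_hermitian[OF M0']]
  have d: "M - M0 \<in> carrier_mat n n" and d': "M' - M0' \<in> carrier_mat n n"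
    using cM0 cM0' by (simp_all add: minus_carrier_mat)
  note N' = psd_mconj[OF M'] and N0' = psd_mconj[OF M0']
  have "opnorm (mconj M' * (M - M0)) \<le> opnorm (mconj M0' * (M - M0)) + opnorm (mconj (M' - M0') * (M - M0))"
    using opnorm_mult_le_split[OF mconj_carrier[OF cM'] mconj_carrier[OF cM0'] d] cM' cM0'
    by (simp add: mconj_minus)
  moreover have "\<bar>eigs_desc (msqrt (mconj M') * M * msqrt (mconj M')) ! j
      - eigs_desc (msqrt (mconj M') * M0 * msqrt (mconj M')) ! j\<bar> \<le> opnorm (mconj M' * (M - M0))"
    by (rule eigs_desc_msqrt_sandwich_diff_le[OF N' hM hM0 j])
  moreover have "msqrt M0 * (mconj M' - mconj M0') * msqrt M0
      = mconj (msqrt (mconj M0) * (M' - M0') * msqrt (mconj M0))"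
    using cM' cM0' hermitian_matD(1)[OF psd_mat_hermitian[OF msqrt_psd_square(1)[OF M0]]]
    by (simp add: msqrt_mconj[OF M0] mconj_mult[of _ n n _ n] mconj_minus[of _ n n] mult_carrier_mat[of _ n n]
        minus_carrier_mat)
  then have "\<bar>eigs_desc (msqrt M0 * mconj M' * msqrt M0) ! j - eigs_desc (msqrt M0 * mconj M0' * msqrt M0) ! j\<bar>
      \<le> opnorm (msqrt (mconj M0) * (M' - M0') * msqrt (mconj M0))"
    using eigs_desc_sandwich_diff_le[OF psd_mat_hermitian[OF msqrt_psd_square(1)[OF M0]]
        psd_mat_hermitian[OF N'] psd_mat_hermitian[OF N0'] j] cM0' d'
      opnorm_mconj[of "msqrt (mconj M0) * (M' - M0') * msqrt (mconj M0)" n n]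
      hermitian_matD(1)[OF psd_mat_hermitian[OF msqrt_psd_square(1)[OF psd_mconj[OF M0]]]]
    by (simp add: mult_carrier_mat[of _ n n])
  ultimately show ?thesis
    unfolding eigs_desc_msqrt_sandwich_swap[OF M0 N'] eigs_desc_msqrt_sandwich_swap[OF M0 N0'] by linarith
qed

lemma sandwich_perturbation_bound_M'_first:
  fixes M M' M0 M0' :: "complex mat"
  assumes M: "psd_mat n M" and M': "psd_mat n M'" and M0: "psd_mat n M0" and M0': "psd_mat n M0'"
    and j: "j < n"
  shows "\<bar>eigs_desc (msqrt (mconj M') * M * msqrt (mconj M')) ! j
          - eigs_desc (msqrt (mconj M0') * M0 * msqrt (mconj M0')) ! j\<bar>
     \<le> opnorm (mconj M0 * (M' - M0')) + opnorm (msqrt (mconj M0') * (M - M0) * msqrt (mconj M0'))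
       + opnorm (mconj (M' - M0') * (M - M0))"
proof -
  note hM = psd_mat_hermitian[OF M] and hM0 = psd_mat_hermitian[OF M0]
    and hM' = psd_mat_hermitian[OF M'] and hM0' = psd_mat_hermitian[OF M0']
  note cM = hermitian_matD(1)[OF hM] and cM0 = hermitian_matD(1)[OF hM0]
    and cM' = hermitian_matD(1)[OF hM'] and cM0' = hermitian_matD(1)[OF hM0']
  have hd: "hermitian_mat n (M - M0)" and hd': "hermitian_mat n (mconj (M' - M0'))"
    using hM hM0 hM' hM0' by (simp_all add: hermitian_mat_minus hermitian_mconj)
  note d = hermitian_matD(1)[OF hd] and d' = hermitian_matD(1)[OF hd']
  note N' = psd_mconj[OF M'] and N0' = psd_mconj[OF M0']
  have "opnorm (M * (mconj M' - mconj M0'))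
      \<le> opnorm (M0 * mconj (M' - M0')) + opnorm ((M - M0) * mconj (M' - M0'))"
    using opnorm_mult_le_split[OF cM cM0 d'] cM' cM0' by (simp add: mconj_minus)
  also have "opnorm (M0 * mconj (M' - M0')) = opnorm (mconj M0 * (M' - M0'))"
    using opnorm_mconj[of "mconj M0 * (M' - M0')" n n] cM0 cM' cM0'
    by (simp add: mconj_mult[of _ n n _ n] mult_carrier_mat[of _ n n] minus_carrier_mat)
  also have "opnorm ((M - M0) * mconj (M' - M0')) = opnorm (mconj (M' - M0') * (M - M0))"
    by (rule opnorm_mult_hermitian_commute[OF hd hd'])
  finally have "\<bar>eigs_desc (msqrt M * mconj M' * msqrt M) ! j - eigs_desc (msqrt M * mconj M0' * msqrt M) ! j\<bar>
      \<le> opnorm (mconj M0 * (M' - M0')) + opnorm (mconj (M' - M0') * (M - M0))"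
    using eigs_desc_msqrt_sandwich_diff_le[OF M psd_mat_hermitian[OF N'] psd_mat_hermitian[OF N0'] j]
    by linarith
  moreover have "\<bar>eigs_desc (msqrt (mconj M0') * M * msqrt (mconj M0')) ! j
      - eigs_desc (msqrt (mconj M0') * M0 * msqrt (mconj M0')) ! j\<bar>
      \<le> opnorm (msqrt (mconj M0') * (M - M0) * msqrt (mconj M0'))"
    by (rule eigs_desc_sandwich_diff_le[OF psd_mat_hermitian[OF msqrt_psd_square(1)[OF N0']] hM hM0 j])
  ultimately show ?thesis
    unfolding eigs_desc_msqrt_sandwich_swap[OF M N'] eigs_desc_msqrt_sandwich_swap[OF M N0'] by linarith
qed

theorem lemma13:
  fixes M M' M0 M0' :: "complex mat" and n j :: nat
  assumes "psd_mat n M" and "psd_mat n M'" and "psd_mat n M0" and "psd_mat n M0'"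
    and "j < n"
  shows "\<bar>eigs_desc (msqrt (mconj M') * M * msqrt (mconj M')) ! j
          - eigs_desc (msqrt (mconj M0') * M0 * msqrt (mconj M0')) ! j\<bar>
     \<le> min (opnorm (mconj M0' * (M - M0))
             + opnorm (msqrt (mconj M0) * (M' - M0') * msqrt (mconj M0)))
            (opnorm (mconj M0 * (M' - M0'))
             + opnorm (msqrt (mconj M0') * (M - M0) * msqrt (mconj M0')))
       + opnorm (mconj (M' - M0') * (M - M0))"
  using sandwich_perturbation_bound_M_first[OF assms] sandwich_perturbation_bound_M'_first[OF assms]
  by linarith

end
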